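(* Let $u,v\in\Sigma_n$ satisfy $\ell(uv)=\ell(u)+\ell(v)$. Let $T_u$ be a BSL of $D(u)$ all of whose labels are marked, and let $T_v$ be a BSL of $D(v)$ all of whose labels are unmarked. Then $T=T_u v+uT_v$ is a BSL of $D(uv)$. Conversely, for every $w\in\Sigma_n$, every BSL $T$ of $D(w)$ arises in this way from a unique triple $(u,v)$ with $uv=w$, $\ell(w)=\ell(u)+\ell(v)$, together with a unique BSL $T_u$ of $D(u)$ using only marked letters and a unique BSL $T_v$ of $D(v)$ using only unmarked letters.
   Context: Permutations in $\Sigma_n$ are multiplied as functions; $s_i$ is the transposition of $i$ and $i+1$; $\ell(w)=\#\{i<j: w(i)>w(j)\}$ is the length. The diagram of $w$ is $D(w)=\{(i,w(j)) : i<j,\ w(i)>w(j)\}$, a set of boxes $(i,j)$ with $i$ the row index (top to bottom) and $j$ the column index (left to right). Fix the totally ordered alphabet $\cdots<3'<2'<1'<1<2<3<\cdots$; letters $i'$ are marked, letters $i$ unmarked. A labeling of $D(w)$ is a map from $D(w)$ to the alphabet. The hook of a box $b=(i,j)\in D(w)$ consists of $b$, the boxes of $D(w)$ in column $j$ below $b$, and the boxes of $D(w)$ in row $i$ to the right of $b$. A hook is balanced (for a labeling $T$) if, when its entries are rearranged so that they weakly increase along the path starting at the rightmost box of the row part, going left to the corner $b$, and then down the column part, the entry in the corner $b$ is unchanged. A balanced super labeling (BSL) of $D(w)$ is a labeling $T$ such that every hook is balanced, no unmarked letter occurs twice in any column, no marked letter occurs twice in any row, and $j'\le T(i,j)\le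 i$ for every box $(i,j)\in D(w)$. The empty diagram has exactly one labeling. A labeling of $D(w)$ is regarded as an $n\times n$ array which is $0$ outside $D(w)$, with the conventions $0+a=a+0=a$ for any letter $a$ and $1'<0<1$. For an $n\times n$ array $A$ and $w\in\Sigma_n$ define $(wA)_{i,j}=A_{i,w(j)}$ and $(Aw)_{i,j}=A_{w^{-1}(i),j}$. *)

theory Defs
  imports Main "HOL-Combinatorics.Permutations" "HOL-Library.Multiset"
begin

(* Permutations of {1..n} are functions nat => nat with  w permutes {1..n};
   the product uv is function composition u o v. *)

definition perm_len :: "nat \<Rightarrow> (nat \<Rightarrow> nat) \<Rightarrow> nat" where
  "perm_len n w = card {(i, j). i \<in> {1..n} \<and> j \<in> {1..n} \<and> i < j \<and> w j < w i}"

definition diagram :: "nat \<Rightarrow> (nat \<Rightarrow> nat) \<Rightarrow> (nat \<times> nat) set" where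
  "diagram n w = {(i, w j) | i j. i \<in> {1..n} \<and> j \<in> {1..n} \<and> i < j \<and> w j < w i}"

(* Letters encoded as nonzero integers: unmarked letter k is  int k, marked letter k' is  - int k.
   Then  ... < 3' < 2' < 1' < 1 < 2 < 3 < ...  is the usual order on int, and 0 (the value of an
   array outside the diagram) satisfies 1' < 0 < 1.  A labeling is an array nat => nat => int
   (row, column), zero outside the diagram. *)
type_synonym labeling = "nat \<Rightarrow> nat \<Rightarrow> int"

definition is_marked :: "int \<Rightarrow> bool" where "is_marked a \<longleftrightarrow> a < 0"
definition is_unmarked :: "int \<Rightarrow> bool" where "is_unmarked a \<longleftrightarrow> 0 < a"

definition hook_row :: "(nat \<times> nat) set \<Rightarrow> nat \<times> nat \<Rightarrow> (nat \<times> nat) set" where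
  "hook_row D b = {(r, c) \<in> D. r = fst b \<and> snd b < c}"

definition hook_col :: "(nat \<times> nat) set \<Rightarrow> nat \<times> nat \<Rightarrow> (nat \<times> nat) set" where
  "hook_col D b = {(r, c) \<in> D. c = snd b \<and> fst b < r}"

definition hook :: "(nat \<times> nat) set \<Rightarrow> nat \<times> nat \<Rightarrow> (nat \<times> nat) set" where
  "hook D b = insert b (hook_row D b \<union> hook_col D b)"

(* Balanced: sorting the hook entries weakly increasingly along the path (row part from the right,
   then the corner, then the column part downward), the corner (position = number of row boxes,
   counted from 0) keeps its entry. *)
definition balanced_hook :: "(nat \<times> nat) set \<Rightarrow> labeling \<Rightarrow> nat \<times> nat \<Rightarrow> bool" where
  "balanced_hook D T b \<longleftrightarrow>
     sorted_list_of_multiset (image_mset (\<lambda>(r, c). T r c) (mset_set (hook D b)))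
       ! card (hook_row D b) = T (fst b) (snd b)"

definition is_BSL :: "nat \<Rightarrow> (nat \<Rightarrow> nat) \<Rightarrow> labeling \<Rightarrow> bool" where
  "is_BSL n w T \<longleftrightarrow>
     (\<forall>i j. (i, j) \<notin> diagram n w \<longrightarrow> T i j = 0) \<and>
     (\<forall>(i, j) \<in> diagram n w. T i j \<noteq> 0 \<and> - int j \<le> T i j \<and> T i j \<le> int i) \<and>
     (\<forall>b \<in> diagram n w. balanced_hook (diagram n w) T b) \<and>
     (\<forall>(i, j) \<in> diagram n w. \<forall>(i', j') \<in> diagram n w.
        (i, j) \<noteq> (i', j') \<and> j = j' \<and> T i j = T i' j' \<longrightarrow> \<not> is_unmarked (T i j)) \<and>
     (\<forall>(i, j) \<in> diagram n w. \<forall>(i', j') \<in> diagram n w.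
        (i, j) \<noteq> (i', j') \<and> i = i' \<and> T i j = T i' j' \<longrightarrow> \<not> is_marked (T i j))"

definition perm_act_left :: "(nat \<Rightarrow> nat) \<Rightarrow> labeling \<Rightarrow> labeling" where
  "perm_act_left w A = (\<lambda>i j. A i (w j))"

definition perm_act_right :: "labeling \<Rightarrow> (nat \<Rightarrow> nat) \<Rightarrow> labeling" where
  "perm_act_right A w = (\<lambda>i j. A (inv w i) j)"

definition arr_add :: "labeling \<Rightarrow> labeling \<Rightarrow> labeling" where
  "arr_add A B = (\<lambda>i j. A i j + B i j)"

end

theory Submission
  imports Defs
begin

(* 1. A hook is balanced iff two counting inequalities hold between the row part and the column
      part (balanced_counts); this replaces the sorting in the definition by cardinalities.
   2. Combinatorics of diagrams: card D(w) = l(w), and if s_r w' > w' (left ascent at r) then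
      D(s_r w') is D(w') with the columns r, r+1 swapped plus one new box (w'^-1(r), r).
   3. The swap lemma (locale adjacent_swap): if t < 0 is a lower bound of all entries, then
      labelings of D(s_r w') carrying t in the new box correspond to labelings of D(w') (with a
      mild condition on the row of the new box), preserving the BSL property in both directions.
   4. In a BSL with a marked entry, the minimal entry (lowest among minima) sits in a box (q, r)
      with w q = r + 1; removing it is an inverse of step 3.
   The first half of the theorem follows by induction on l(u), peeling the minimal letter of Tu;
   existence in the second half by induction on l(w), peeling the minimal letter of T; uniqueness
   because the unmarked entries of row i of T are exactly the images under u of row i of D(v),
   which determines v, hence u = w v^-1, and then Tu, Tv are read off from T. *)

section \<open>Balanced hooks as counting inequalities\<close>

lemma sorted_nth_downclosed:
  fixes xs :: "int list"
  assumes "sorted xs" "k < length xs" "\<And>x x'. P x \<Longrightarrow> x' \<le> x \<Longrightarrow> P x'"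
  shows "P (xs ! k) \<longleftrightarrow> k < length (filter P xs)"
  using assms
proof (induction xs arbitrary: k)
  case Nil then show ?case by simp
next
  case (Cons a xs)
  show ?case
  proof (cases "P a")
    case True
    then show ?thesis using Cons by (cases k) auto
  next
    case False
    have "\<forall>x\<in>set xs. \<not> P x" using False Cons.prems(1) Cons.prems(3) by auto
    then have "filter P xs = []" by (simp add: filter_empty_conv)
    moreover have "\<not> P ((a#xs)!k)"
      using False Cons.prems \<open>\<forall>x\<in>set xs. \<not> P x\<close> by (cases k) auto
    ultimately show ?thesis using False by simp
  qed
qed

lemma sorted_nth_eq_iff:
  fixes xs :: "int list"
  assumes "sorted xs" "k < length xs"
  shows "xs ! k = y \<longleftrightarrow>
           length (filter (\<lambda>x. x < y) xs) \<le> k \<and> k < length (filter (\<lambda>x. x \<le> y) xs)"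
proof -
  have "(xs!k < y) \<longleftrightarrow> k < length (filter (\<lambda>x. x < y) xs)"
    by (rule sorted_nth_downclosed[OF assms]) auto
  moreover have "(xs!k \<le> y) \<longleftrightarrow> k < length (filter (\<lambda>x. x \<le> y) xs)"
    by (rule sorted_nth_downclosed[OF assms]) auto
  ultimately show ?thesis by auto
qed

definition label_count :: "(nat \<times> nat) set \<Rightarrow> labeling \<Rightarrow> (int \<Rightarrow> bool) \<Rightarrow> nat" where
  "label_count A T P = card {p\<in>A. P (T (fst p) (snd p))}"

definition row_count :: "(nat \<times> nat) set \<Rightarrow> labeling \<Rightarrow> nat \<Rightarrow> nat \<Rightarrow> (int \<Rightarrow> bool) \<Rightarrow> nat" where
  "row_count D T i c P = card {c'. (i, c') \<in> D \<and> c < c' \<and> P (T i c')}"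

definition col_count :: "(nat \<times> nat) set \<Rightarrow> labeling \<Rightarrow> nat \<Rightarrow> nat \<Rightarrow> (int \<Rightarrow> bool) \<Rightarrow> nat" where
  "col_count D T i c P = card {k. (k, c) \<in> D \<and> i < k \<and> P (T k c)}"

definition balanced_counts :: "(nat \<times> nat) set \<Rightarrow> labeling \<Rightarrow> nat \<Rightarrow> nat \<Rightarrow> bool" where
  "balanced_counts D T i c \<longleftrightarrow>
     col_count D T i c (\<lambda>x. x < T i c) \<le> row_count D T i c (\<lambda>x. T i c \<le> x) \<and>
     row_count D T i c (\<lambda>x. T i c < x) \<le> col_count D T i c (\<lambda>x. x \<le> T i c)"

lemma size_filter_labels:
  assumes "finite A"
  shows "size (filter_mset P (image_mset (\<lambda>(r, c). T r c) (mset_set A))) = label_count A T P"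
proof -
  have "filter_mset P (image_mset (\<lambda>(r, c). T r c) (mset_set A)) =
        image_mset (\<lambda>(r, c). T r c) (filter_mset (\<lambda>p. P (T (fst p) (snd p))) (mset_set A))"
    by (simp add: filter_mset_image_mset case_prod_beta)
  also have "filter_mset (\<lambda>p. P (T (fst p) (snd p))) (mset_set A) =
             mset_set {p\<in>A. P (T (fst p) (snd p))}"
    using assms by simp
  finally show ?thesis by (simp add: label_count_def)
qed

lemma label_count_complement: "finite A \<Longrightarrow> card A = label_count A T P + label_count A T (\<lambda>x. \<not> P x)"
  unfolding label_count_def
  by (subst card_Un_disjoint[symmetric]) (auto intro: arg_cong[where f=card])

lemma label_count_hook_row: "label_count (hook_row D (i, c)) T P = row_count D T i c P"
proof -
  have "{p \<in> hook_row D (i, c). P (T (fst p) (snd p))} =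
        (\<lambda>c'. (i, c')) ` {c'. (i, c') \<in> D \<and> c < c' \<and> P (T i c')}"
    unfolding hook_row_def by auto
  moreover have "inj_on (\<lambda>c'. (i, c')) X" for X :: "nat set" by (auto simp: inj_on_def)
  ultimately show ?thesis unfolding label_count_def row_count_def by (simp add: card_image)
qed

lemma label_count_hook_col: "label_count (hook_col D (i, c)) T P = col_count D T i c P"
proof -
  have "{p \<in> hook_col D (i, c). P (T (fst p) (snd p))} =
        (\<lambda>k. (k, c)) ` {k. (k, c) \<in> D \<and> i < k \<and> P (T k c)}"
    unfolding hook_col_def by auto
  moreover have "inj_on (\<lambda>k. (k, c)) X" for X :: "nat set" by (auto simp: inj_on_def)
  ultimately show ?thesis unfolding label_count_def col_count_def by (simp add: card_image)
qed

lemma hook_label_count: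
  assumes "finite D"
  shows "size (filter_mset P (image_mset (\<lambda>(r, c). T r c) (mset_set (hook D (i, c))))) =
           (if P (T i c) then 1 else 0) + row_count D T i c P + col_count D T i c P"
proof -
  define R where "R = hook_row D (i, c)"
  define C where "C = hook_col D (i, c)"
  have fR: "finite R" and fC: "finite C"
    using assms unfolding R_def C_def hook_row_def hook_col_def by (auto intro: finite_subset)
  have "(i, c) \<notin> R" "(i, c) \<notin> C" "R \<inter> C = {}"
    unfolding R_def C_def hook_row_def hook_col_def by auto
  then have "mset_set (hook D (i, c)) = add_mset (i, c) (mset_set R + mset_set C)"
    unfolding hook_def R_def[symmetric] C_def[symmetric] using fR fC by (simp add: mset_set_Union)
  then show ?thesis
    using size_filter_labels[OF fR, of P T] size_filter_labels[OF fC, of P T]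
    unfolding R_def C_def label_count_hook_row label_count_hook_col by simp
qed

lemma balanced_hook_iff_counts:
  assumes "finite D"
  shows "balanced_hook D T (i, c) \<longleftrightarrow> balanced_counts D T i c"
proof -
  define y where "y = T i c"
  define xs where "xs = sorted_list_of_multiset (image_mset (\<lambda>(r, c). T r c) (mset_set (hook D (i, c))))"
  have filter_len: "length (filter P xs) = (if P y then 1 else 0) + row_count D T i c P + col_count D T i c P"
    for P
    using hook_label_count[OF assms, of P T i c] unfolding xs_def y_def
    by (metis mset_filter mset_sorted_list_of_multiset size_mset)
  have fR: "finite (hook_row D (i, c))"
    using assms unfolding hook_row_def by (auto intro: finite_subset)
  have card_R: "card (hook_row D (i, c)) = row_count D T i c (\<lambda>_. True)"
    using label_count_hook_row[of D i c T "\<lambda>_. True"] unfolding label_count_def by simp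
  have sorted: "sorted xs" unfolding xs_def by simp
  have len: "card (hook_row D (i, c)) < length xs" using filter_len[of "\<lambda>_. True"] card_R by simp
  have "balanced_hook D T (i, c) \<longleftrightarrow> xs ! card (hook_row D (i, c)) = y"
    unfolding balanced_hook_def xs_def y_def by simp
  also have "\<dots> \<longleftrightarrow> length (filter (\<lambda>x. x < y) xs) \<le> card (hook_row D (i, c)) \<and>
                    card (hook_row D (i, c)) < length (filter (\<lambda>x. x \<le> y) xs)"
    by (rule sorted_nth_eq_iff[OF sorted len])
  also have "\<dots> \<longleftrightarrow> balanced_counts D T i c"
  proof -
    have "card (hook_row D (i, c)) = row_count D T i c (\<lambda>x. x < y) + row_count D T i c (\<lambda>x. y \<le> x)"
      using label_count_complement[OF fR, of T "\<lambda>x. x < y"]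
      unfolding label_count_hook_row by (simp add: not_less)
    moreover have "card (hook_row D (i, c)) = row_count D T i c (\<lambda>x. x \<le> y) + row_count D T i c (\<lambda>x. y < x)"
      using label_count_complement[OF fR, of T "\<lambda>x. x \<le> y"]
      unfolding label_count_hook_row by (simp add: not_le)
    ultimately show ?thesis unfolding balanced_counts_def filter_len y_def[symmetric] by auto
  qed
  finally show ?thesis .
qed

section \<open>Permutations and their diagrams\<close>

definition adj_swap :: "nat \<Rightarrow> nat \<Rightarrow> nat" where "adj_swap r = transpose r (Suc r)"

lemma adj_swap_simps[simp]: "adj_swap r r = Suc r" "adj_swap r (Suc r) = r"
  "c \<noteq> r \<Longrightarrow> c \<noteq> Suc r \<Longrightarrow> adj_swap r c = c"
  by (auto simp: adj_swap_def)

lemma adj_swap_cases: "adj_swap r c = (if c = r then Suc r else if c = Suc r then r else c)"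
  by (simp add: adj_swap_def transpose_def)

lemma adj_swap_involution[simp]: "adj_swap r (adj_swap r c) = c"
  by (simp add: adj_swap_def transpose_def)

lemma adj_swap_comp_involution[simp]: "adj_swap r \<circ> (adj_swap r \<circ> f) = f"
  by (simp add: fun_eq_iff)

lemma adj_swap_eq_iff: "adj_swap r a = adj_swap r b \<longleftrightarrow> a = b"
  by (metis adj_swap_involution)

lemma card_adj_swap: "card {c. Q c} = card {c. Q (adj_swap r c)}"
proof -
  have "{c. Q c} = adj_swap r ` {c. Q (adj_swap r c)}"
    by (auto simp: image_iff) (metis adj_swap_involution)
  moreover have "inj_on (adj_swap r) X" for X by (auto simp: inj_on_def adj_swap_eq_iff)
  ultimately show ?thesis by (simp add: card_image)
qed

lemma adj_swap_less_below: "c < r \<Longrightarrow> (c < adj_swap r x \<longleftrightarrow> c < x)"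
  by (auto simp: adj_swap_cases)
lemma adj_swap_less_above: "Suc r < c \<Longrightarrow> (c < adj_swap r x \<longleftrightarrow> c < x)"
  by (auto simp: adj_swap_cases)
lemma adj_swap_less_r: "r < adj_swap r x \<longleftrightarrow> x = r \<or> Suc r < x"
  by (auto simp: adj_swap_cases)
lemma adj_swap_less_succ: "Suc r < adj_swap r x \<longleftrightarrow> Suc r < x"
  by (auto simp: adj_swap_cases)

lemma inv_adj_swap_comp:
  assumes "w permutes S"
  shows "inv (adj_swap r \<circ> w) = inv w \<circ> adj_swap r"
  using o_inv_distrib[OF bij_transpose permutes_bij[OF assms]] by (simp add: adj_swap_def)

lemma adj_swap_permutes: "1 \<le> r \<Longrightarrow> Suc r \<le> n \<Longrightarrow> adj_swap r permutes {1..n}"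
  unfolding adj_swap_def by (rule permutes_swap_id) auto

(* s_r w > w in the left weak order: r occurs before r + 1 in the one-line notation of w^-1. *)
abbreviation left_ascent :: "(nat \<Rightarrow> nat) \<Rightarrow> nat \<Rightarrow> bool" where
  "left_ascent w r \<equiv> inv w r < inv w (Suc r)"

lemma diagram_iff:
  assumes "w permutes {1..n}"
  shows "(i, c) \<in> diagram n w \<longleftrightarrow> 1 \<le> i \<and> 1 \<le> c \<and> c \<le> n \<and> i < inv w c \<and> c < w i"
proof
  assume "(i, c) \<in> diagram n w"
  then obtain j where j: "c = w j" "i \<in> {1..n}" "j \<in> {1..n}" "i < j" "w j < w i"
    unfolding diagram_def by auto
  have "c \<in> {1..n}" using j permutes_in_image[OF assms] by auto
  moreover have "inv w c = j" using j permutes_inverses[OF assms] by auto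
  ultimately show "1 \<le> i \<and> 1 \<le> c \<and> c \<le> n \<and> i < inv w c \<and> c < w i" using j by auto
next
  assume h: "1 \<le> i \<and> 1 \<le> c \<and> c \<le> n \<and> i < inv w c \<and> c < w i"
  have "inv w c \<in> {1..n}" using h permutes_in_image[OF permutes_inv[OF assms]] by auto
  moreover have "w (inv w c) = c" using permutes_inverses[OF assms] by auto
  ultimately have "i \<in> {1..n} \<and> inv w c \<in> {1..n} \<and> i < inv w c \<and> w (inv w c) < w i \<and>
                   (i, c) = (i, w (inv w c))"
    using h by auto
  then show "(i, c) \<in> diagram n w" unfolding diagram_def by blast
qed

lemma finite_diagram[simp]: "finite (diagram n w)"
proof (rule finite_subset)
  show "diagram n w \<subseteq> {1..n} \<times> (w ` {1..n})" unfolding diagram_def by auto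
qed auto

lemma diagram_id: "diagram n id = {}"
  unfolding diagram_def by auto

(* l(w) = |D(w)|: the box (i, w j) records the inversion (i, j). *)
lemma perm_len_card_diagram:
  assumes "w permutes {1..n}"
  shows "perm_len n w = card (diagram n w)"
proof -
  let ?I = "{(i, j). i \<in> {1..n} \<and> j \<in> {1..n} \<and> i < j \<and> w j < w i}"
  have "diagram n w = (\<lambda>(i, j). (i, w j)) ` ?I" unfolding diagram_def by auto
  moreover have "inj_on (\<lambda>(i, j). (i, w j)) ?I"
    using permutes_inj[OF assms] by (auto simp: inj_on_def inj_def)
  ultimately show ?thesis unfolding perm_len_def by (simp add: card_image)
qed

(* The box (w^-1 r, r + 1) is never in D(w): its row maps to r < r + 1. *)
lemma box_not_in_diagram:
  assumes "w permutes {1..n}"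
  shows "(inv w r, Suc r) \<notin> diagram n w"
  using permutes_inverses[OF assms] unfolding diagram_iff[OF assms] by auto

lemma diagram_adj_swap:
  assumes w: "w permutes {1..n}" and r: "1 \<le> r" "Suc r \<le> n" and asc: "left_ascent w r"
  shows "(i, c) \<in> diagram n (adj_swap r \<circ> w) \<longleftrightarrow>
           (i, adj_swap r c) \<in> diagram n w \<or> (i, c) = (inv w r, r)"
proof -
  have sw: "adj_swap r \<circ> w permutes {1..n}" by (rule permutes_compose[OF w adj_swap_permutes[OF r]])
  have inv_sw: "inv (adj_swap r \<circ> w) c = inv w (adj_swap r c)" using inv_adj_swap_comp[OF w] by simp
  have w_eq: "w i = r \<longleftrightarrow> i = inv w r" "w i = Suc r \<longleftrightarrow> i = inv w (Suc r)"
    using permutes_inverses[OF w] by metis+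
  have pos: "1 \<le> inv w r" using permutes_in_image[OF permutes_inv[OF w], of r] r by auto
  have "(1 \<le> i \<and> 1 \<le> c \<and> c \<le> n \<and> i < inv w (adj_swap r c) \<and> c < adj_swap r (w i)) \<longleftrightarrow>
        ((1 \<le> i \<and> 1 \<le> adj_swap r c \<and> adj_swap r c \<le> n \<and> i < inv w (adj_swap r c) \<and>
          adj_swap r c < w i) \<or> (i, c) = (inv w r, r))"
    using r asc w_eq pos
    by (cases "c = r"; cases "c = Suc r"; cases "w i = r"; cases "w i = Suc r") (auto simp: adj_swap_cases)
  then show ?thesis
    unfolding diagram_iff[OF sw] diagram_iff[OF w] inv_sw o_apply by simp
qed

lemma perm_len_adj_swap:
  assumes w: "w permutes {1..n}" and r: "1 \<le> r" "Suc r \<le> n"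
  shows "left_ascent w r \<Longrightarrow> perm_len n (adj_swap r \<circ> w) = Suc (perm_len n w)"
    and "\<not> left_ascent w r \<Longrightarrow> perm_len n w = Suc (perm_len n (adj_swap r \<circ> w))"
proof -
  have card_swap: "perm_len n (adj_swap r \<circ> x) = Suc (perm_len n x)"
    if x: "x permutes {1..n}" and asc: "left_ascent x r" for x
  proof -
    have sx: "adj_swap r \<circ> x permutes {1..n}" by (rule permutes_compose[OF x adj_swap_permutes[OF r]])
    have "diagram n (adj_swap r \<circ> x) =
          insert (inv x r, r) ((\<lambda>(i, c). (i, adj_swap r c)) ` diagram n x)"
    proof (rule set_eqI)
      fix p :: "nat \<times> nat"
      show "p \<in> diagram n (adj_swap r \<circ> x) \<longleftrightarrow>
            p \<in> insert (inv x r, r) ((\<lambda>(i, c). (i, adj_swap r c)) ` diagram n x)"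
        using diagram_adj_swap[OF x r asc, of "fst p" "snd p"]
        by (cases p) (force simp: image_iff adj_swap_eq_iff)
    qed
    moreover have "inj_on (\<lambda>(i, c). (i, adj_swap r c)) (diagram n x)"
      by (auto simp: inj_on_def adj_swap_eq_iff)
    moreover have "(inv x r, r) \<notin> (\<lambda>(i, c). (i, adj_swap r c)) ` diagram n x"
    proof
      assume "(inv x r, r) \<in> (\<lambda>(i, c). (i, adj_swap r c)) ` diagram n x"
      then obtain c where "(inv x r, c) \<in> diagram n x" "adj_swap r c = r" by auto
      then show False using box_not_in_diagram[OF x, of r] by (metis adj_swap_involution adj_swap_simps(1))
    qed
    ultimately show ?thesis
      unfolding perm_len_card_diagram[OF x] perm_len_card_diagram[OF sx] by (simp add: card_image)
  qed
  show "left_ascent w r \<Longrightarrow> perm_len n (adj_swap r \<circ> w) = Suc (perm_len n w)"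
    by (rule card_swap[OF w])
  assume desc: "\<not> left_ascent w r"
  have sw: "adj_swap r \<circ> w permutes {1..n}" by (rule permutes_compose[OF w adj_swap_permutes[OF r]])
  have "inv w r \<noteq> inv w (Suc r)" using permutes_inverses[OF w] by (metis n_not_Suc_n)
  then have "left_ascent (adj_swap r \<circ> w) r" using desc inv_adj_swap_comp[OF w] by simp
  from card_swap[OF sw this] show "perm_len n w = Suc (perm_len n (adj_swap r \<circ> w))" by simp
qed

(* Subadditivity l(xy) \<le> l(x) + l(y): an inversion of xy is one of y or the pull-back
   of an inversion of x. *)
lemma perm_len_subadditive:
  assumes x: "x permutes {1..n}" and y: "y permutes {1..n}"
  shows "perm_len n (x \<circ> y) \<le> perm_len n x + perm_len n y"
proof -
  define inversions where
    "inversions w = {(i, j). i \<in> {1..n} \<and> j \<in> {1..n} \<and> i < j \<and> w j < w i}" for w :: "nat \<Rightarrow> nat"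
  have fin: "finite (inversions w)" for w
    by (rule finite_subset[of _ "{1..n} \<times> {1..n}"]) (auto simp: inversions_def)
  let ?g = "\<lambda>(a, b). (inv y a, inv y b)"
  have "inversions (x \<circ> y) \<subseteq> inversions y \<union> ?g ` inversions x"
  proof
    fix p assume "p \<in> inversions (x \<circ> y)"
    then obtain i j where ij: "p = (i, j)" "i \<in> {1..n}" "j \<in> {1..n}" "i < j" "x (y j) < x (y i)"
      unfolding inversions_def by auto
    show "p \<in> inversions y \<union> ?g ` inversions x"
    proof (cases "y j < y i")
      case True then show ?thesis using ij unfolding inversions_def by auto
    next
      case False
      then have "y i < y j" using ij permutes_inj[OF y] by (metis linorder_neqE_nat less_irrefl)
      moreover have "y i \<in> {1..n}" "y j \<in> {1..n}" using ij permutes_in_image[OF y] by auto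
      ultimately have "(y i, y j) \<in> inversions x" using ij unfolding inversions_def by auto
      moreover have "?g (y i, y j) = p" using ij permutes_inverses[OF y] by simp
      ultimately show ?thesis by (metis UnI2 image_eqI)
    qed
  qed
  then have "card (inversions (x \<circ> y)) \<le> card (inversions y \<union> ?g ` inversions x)"
    by (rule card_mono[rotated]) (simp add: fin)
  also have "\<dots> \<le> card (inversions y) + card (?g ` inversions x)" by (rule card_Un_le)
  also have "\<dots> \<le> card (inversions y) + card (inversions x)" using card_image_le[OF fin] by simp
  finally show ?thesis unfolding perm_len_def inversions_def by simp
qed

lemma length_additive_adj_swap_up:
  assumes u: "u permutes {1..n}" and v: "v permutes {1..n}" and r: "1 \<le> r" "Suc r \<le> n"
    and asc: "left_ascent (u \<circ> v) r"
    and add: "perm_len n (u \<circ> v) = perm_len n u + perm_len n v"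
  shows "left_ascent u r \<and>
         perm_len n (adj_swap r \<circ> u \<circ> v) = perm_len n (adj_swap r \<circ> u) + perm_len n v"
proof -
  have su: "adj_swap r \<circ> u permutes {1..n}" by (rule permutes_compose[OF u adj_swap_permutes[OF r]])
  have uv: "u \<circ> v permutes {1..n}" by (rule permutes_compose[OF v u])
  have up: "perm_len n (adj_swap r \<circ> u \<circ> v) = Suc (perm_len n (u \<circ> v))"
    using perm_len_adj_swap(1)[OF uv r asc] by (simp add: o_assoc)
  have sub: "perm_len n (adj_swap r \<circ> u \<circ> v) \<le> perm_len n (adj_swap r \<circ> u) + perm_len n v"
    by (rule perm_len_subadditive[OF su v])
  have "left_ascent u r"
    using perm_len_adj_swap(2)[OF u r] up sub add by (cases "left_ascent u r") auto
  then show ?thesis using perm_len_adj_swap(1)[OF u r] up add by simp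
qed

lemma length_additive_adj_swap_down:
  assumes u: "u permutes {1..n}" and v: "v permutes {1..n}" and r: "1 \<le> r" "Suc r \<le> n"
    and asc: "left_ascent u r"
    and add: "perm_len n (adj_swap r \<circ> u \<circ> v) = perm_len n (adj_swap r \<circ> u) + perm_len n v"
  shows "left_ascent (u \<circ> v) r \<and> perm_len n (u \<circ> v) = perm_len n u + perm_len n v"
proof -
  have uv: "u \<circ> v permutes {1..n}" by (rule permutes_compose[OF v u])
  have up: "perm_len n (adj_swap r \<circ> u) = Suc (perm_len n u)" by (rule perm_len_adj_swap(1)[OF u r asc])
  have sub: "perm_len n (u \<circ> v) \<le> perm_len n u + perm_len n v" by (rule perm_len_subadditive[OF u v])
  have "left_ascent (u \<circ> v) r"
    using perm_len_adj_swap(2)[OF uv r] up sub add by (cases "left_ascent (u \<circ> v) r") (auto simp: o_assoc)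
  then show ?thesis using perm_len_adj_swap(1)[OF uv r] up add by (simp add: o_assoc)
qed

section \<open>Balanced super labelings in counting form\<close>

lemma is_BSL_iff:
  "is_BSL n w T \<longleftrightarrow>
   (\<forall>i j. (i, j) \<notin> diagram n w \<longrightarrow> T i j = 0) \<and>
   (\<forall>i j. (i, j) \<in> diagram n w \<longrightarrow> T i j \<noteq> 0 \<and> - int j \<le> T i j \<and> T i j \<le> int i) \<and>
   (\<forall>i j. (i, j) \<in> diagram n w \<longrightarrow> balanced_counts (diagram n w) T i j) \<and>
   (\<forall>i j i'. (i, j) \<in> diagram n w \<and> (i', j) \<in> diagram n w \<and> i \<noteq> i' \<and> T i j = T i' j
      \<longrightarrow> T i j \<le> 0) \<and>
   (\<forall>i j j'. (i, j) \<in> diagram n w \<and> (i, j') \<in> diagram n w \<and> j \<noteq> j' \<and> T i j = T i j'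
      \<longrightarrow> 0 \<le> T i j)"
proof -
  let ?D = "diagram n w"
  have "(\<forall>b\<in>?D. balanced_hook ?D T b) \<longleftrightarrow> (\<forall>i j. (i, j) \<in> ?D \<longrightarrow> balanced_counts ?D T i j)"
    using balanced_hook_iff_counts[OF finite_diagram] by auto
  moreover have "(\<forall>(i, j) \<in> ?D. T i j \<noteq> 0 \<and> - int j \<le> T i j \<and> T i j \<le> int i) \<longleftrightarrow>
     (\<forall>i j. (i, j) \<in> ?D \<longrightarrow> T i j \<noteq> 0 \<and> - int j \<le> T i j \<and> T i j \<le> int i)"
    by (auto simp: Ball_def)
  moreover have "(\<forall>(i, j) \<in> ?D. \<forall>(i', j') \<in> ?D. (i, j) \<noteq> (i', j') \<and> j = j' \<and> T i j = T i' j'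
        \<longrightarrow> \<not> is_unmarked (T i j)) \<longleftrightarrow>
     (\<forall>i j i'. (i, j) \<in> ?D \<and> (i', j) \<in> ?D \<and> i \<noteq> i' \<and> T i j = T i' j \<longrightarrow> T i j \<le> 0)"
    unfolding is_unmarked_def not_less by (auto simp: Ball_def)
  moreover have "(\<forall>(i, j) \<in> ?D. \<forall>(i', j') \<in> ?D. (i, j) \<noteq> (i', j') \<and> i = i' \<and> T i j = T i' j'
        \<longrightarrow> \<not> is_marked (T i j)) \<longleftrightarrow>
     (\<forall>i j j'. (i, j) \<in> ?D \<and> (i, j') \<in> ?D \<and> j \<noteq> j' \<and> T i j = T i j' \<longrightarrow> 0 \<le> T i j)"
    unfolding is_marked_def not_less by (auto simp: Ball_def)
  ultimately show ?thesis unfolding is_BSL_def by (simp only:)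
qed

lemma BSL_outside: "is_BSL n w T \<Longrightarrow> (i, j) \<notin> diagram n w \<Longrightarrow> T i j = 0"
  by (drule iffD1[OF is_BSL_iff], drule conjunct1) blast

lemma BSL_entry: "is_BSL n w T \<Longrightarrow> (i, j) \<in> diagram n w \<Longrightarrow>
    T i j \<noteq> 0 \<and> - int j \<le> T i j \<and> T i j \<le> int i"
  by (drule iffD1[OF is_BSL_iff], drule conjunct2, drule conjunct1) blast

lemma BSL_balanced: "is_BSL n w T \<Longrightarrow> (i, j) \<in> diagram n w \<Longrightarrow> balanced_counts (diagram n w) T i j"
  by (drule iffD1[OF is_BSL_iff], drule conjunct2, drule conjunct2, drule conjunct1) blast

lemma BSL_col: "is_BSL n w T \<Longrightarrow> (i, j) \<in> diagram n w \<Longrightarrow> (i', j) \<in> diagram n w \<Longrightarrow> i \<noteq> i' \<Longrightarrow>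
    T i j = T i' j \<Longrightarrow> T i j \<le> 0"
  by (drule iffD1[OF is_BSL_iff], drule conjunct2, drule conjunct2, drule conjunct2, drule conjunct1) blast

lemma BSL_row: "is_BSL n w T \<Longrightarrow> (i, j) \<in> diagram n w \<Longrightarrow> (i, j') \<in> diagram n w \<Longrightarrow> j \<noteq> j' \<Longrightarrow>
    T i j = T i j' \<Longrightarrow> 0 \<le> T i j"
  by (drule iffD1[OF is_BSL_iff], drule conjunct2, drule conjunct2, drule conjunct2, drule conjunct2) blast

lemma is_BSLI:
  assumes "\<And>i j. (i, j) \<notin> diagram n w \<Longrightarrow> T i j = 0"
    and "\<And>i j. (i, j) \<in> diagram n w \<Longrightarrow> T i j \<noteq> 0 \<and> - int j \<le> T i j \<and> T i j \<le> int i"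
    and "\<And>i j. (i, j) \<in> diagram n w \<Longrightarrow> balanced_counts (diagram n w) T i j"
    and "\<And>i j i'. (i, j) \<in> diagram n w \<Longrightarrow> (i', j) \<in> diagram n w \<Longrightarrow> i \<noteq> i' \<Longrightarrow>
           T i j = T i' j \<Longrightarrow> T i j \<le> 0"
    and "\<And>i j j'. (i, j) \<in> diagram n w \<Longrightarrow> (i, j') \<in> diagram n w \<Longrightarrow> j \<noteq> j' \<Longrightarrow>
           T i j = T i j' \<Longrightarrow> 0 \<le> T i j"
  shows "is_BSL n w T"
proof -
  have "\<forall>i j. (i, j) \<notin> diagram n w \<longrightarrow> T i j = 0" using assms(1) by blast
  moreover have "\<forall>i j. (i, j) \<in> diagram n w \<longrightarrow> T i j \<noteq> 0 \<and> - int j \<le> T i j \<and> T i j \<le> int i"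
    using assms(2) by blast
  moreover have "\<forall>i j. (i, j) \<in> diagram n w \<longrightarrow> balanced_counts (diagram n w) T i j"
    using assms(3) by blast
  moreover have "\<forall>i j i'. (i, j) \<in> diagram n w \<and> (i', j) \<in> diagram n w \<and> i \<noteq> i' \<and> T i j = T i' j
      \<longrightarrow> T i j \<le> 0"
    using assms(4) by blast
  moreover have "\<forall>i j j'. (i, j) \<in> diagram n w \<and> (i, j') \<in> diagram n w \<and> j \<noteq> j' \<and> T i j = T i j'
      \<longrightarrow> 0 \<le> T i j"
    using assms(5) by blast
  ultimately show ?thesis unfolding is_BSL_iff by (intro conjI)
qed

lemma balanced_countsD:
  assumes "balanced_counts D T i c" "T i c = y"
  shows "col_count D T i c (\<lambda>x. x < y) \<le> row_count D T i c (\<lambda>x. y \<le> x)"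
        "row_count D T i c (\<lambda>x. y < x) \<le> col_count D T i c (\<lambda>x. x \<le> y)"
  using assms unfolding balanced_counts_def by auto

lemma balanced_countsI:
  assumes "T i c = y"
    "col_count D T i c (\<lambda>x. x < y) \<le> row_count D T i c (\<lambda>x. y \<le> x)"
    "row_count D T i c (\<lambda>x. y < x) \<le> col_count D T i c (\<lambda>x. x \<le> y)"
  shows "balanced_counts D T i c"
  using assms unfolding balanced_counts_def by auto

lemma finite_row_set: "finite D \<Longrightarrow> finite {c'. (i, c') \<in> D \<and> Q c'}"
  by (rule finite_subset[of _ "snd ` D"]) (force+)

lemma finite_col_set: "finite D \<Longrightarrow> finite {k. (k, c) \<in> D \<and> Q k}"
  by (rule finite_subset[of _ "fst ` D"]) (force+)

lemma card_Collect_mono: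
  assumes "finite {x. Q x}" "\<And>x. P x \<Longrightarrow> Q x"
  shows "card {x. P x} \<le> card {x. Q x}"
  by (rule card_mono[OF assms(1)]) (use assms(2) in auto)

lemma card_optional_element:
  assumes "finite A" "R \<Longrightarrow> a \<notin> A"
  shows "card {x. x \<in> A \<or> (x = a \<and> R)} = card A + (if R then 1 else 0)"
proof (cases R)
  case True
  then have "{x. x \<in> A \<or> (x = a \<and> R)} = insert a A" by auto
  then show ?thesis using assms True by simp
next
  case False then show ?thesis by simp
qed

lemma row_count_mono: "finite D \<Longrightarrow> (\<And>v. P v \<Longrightarrow> Q v) \<Longrightarrow> row_count D T i c P \<le> row_count D T i c Q"
  unfolding row_count_def by (rule card_Collect_mono) (auto intro: finite_row_set)

lemma col_count_mono: "finite D \<Longrightarrow> (\<And>v. P v \<Longrightarrow> Q v) \<Longrightarrow> col_count D T i c P \<le> col_count D T i c Q"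
  unfolding col_count_def by (rule card_Collect_mono) (auto intro: finite_col_set)

lemma col_count_below_min:
  assumes "\<And>k c. (k, c) \<in> D \<Longrightarrow> t \<le> T k c"
  shows "col_count D T i c (\<lambda>v. v < t) = 0"
proof -
  have "{k. (k, c) \<in> D \<and> i < k \<and> T k c < t} = {}" using assms by force
  then show ?thesis unfolding col_count_def by (metis card.empty)
qed

section \<open>The swap lemma\<close>

(* The rows k < q meeting column r of D' ("upper rows") are exactly
   those meeting column r + 1 of D. *)
locale adjacent_swap =
  fixes n :: nat and w' :: "nat \<Rightarrow> nat" and r :: nat and t :: int and T T' :: labeling
  assumes w': "w' permutes {1..n}" and r1: "1 \<le> r" and r2: "Suc r \<le> n"
    and asc: "left_ascent w' r"
    and T_eq: "\<And>i j. T i j = (if i = inv w' r \<and> j = r then t else T' i (adj_swap r j))"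
begin

abbreviation "q \<equiv> inv w' r"
abbreviation "D \<equiv> diagram n (adj_swap r \<circ> w')"
abbreviation "D' \<equiv> diagram n w'"

definition upper_row :: "nat \<Rightarrow> bool" where
  "upper_row k \<longleftrightarrow> 1 \<le> k \<and> k < q \<and> Suc r < w' k"

lemma new_diagram_iff: "(i, c) \<in> D \<longleftrightarrow> (i, adj_swap r c) \<in> D' \<or> (i = q \<and> c = r)"
  using diagram_adj_swap[OF w' r1 r2 asc] by simp

lemma new_diagram_swapped_iff:
  "(i, adj_swap r c) \<in> D \<longleftrightarrow> (i, c) \<in> D' \<or> (i = q \<and> c = Suc r)"
  using new_diagram_iff[of i "adj_swap r c"] by (auto simp: adj_swap_cases split: if_splits)

lemma old_of_new_box: "(i, c) \<in> D \<Longrightarrow> (i, c) \<noteq> (q, r) \<Longrightarrow> (i, adj_swap r c) \<in> D'"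
  using new_diagram_iff by auto

lemma new_of_old_box: "(i, c) \<in> D' \<Longrightarrow> (i, adj_swap r c) \<in> D"
  using new_diagram_swapped_iff by simp

lemma old_box_q_succ: "(q, Suc r) \<notin> D'"
  by (rule box_not_in_diagram[OF w'])

lemma old_row_q_left: "(q, c) \<in> D' \<Longrightarrow> c < r"
  using permutes_inverses[OF w'] unfolding diagram_iff[OF w'] by auto

lemma old_col_r_iff: "(k, r) \<in> D' \<longleftrightarrow> upper_row k"
proof -
  have "(k, r) \<in> D' \<longleftrightarrow> 1 \<le> k \<and> k < q \<and> r < w' k"
    unfolding diagram_iff[OF w'] using r1 r2 by auto
  moreover have "k < q \<Longrightarrow> w' k \<noteq> Suc r"
    using permutes_inverses[OF w'] asc by (metis less_asym)
  ultimately show ?thesis unfolding upper_row_def by (auto simp: Suc_lessI)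
qed

lemma old_col_succ_iff: "(k, Suc r) \<in> D' \<longleftrightarrow> 1 \<le> k \<and> k < inv w' (Suc r) \<and> Suc r < w' k"
  unfolding diagram_iff[OF w'] using r1 r2 by auto

lemma upper_row_less: "upper_row k \<Longrightarrow> k < q"
  unfolding upper_row_def by simp

lemma upper_row_succ: "upper_row k \<Longrightarrow> (k, Suc r) \<in> D'"
  unfolding old_col_succ_iff upper_row_def using asc by auto

lemma upper_rowI: "(i, Suc r) \<in> D' \<Longrightarrow> i < q \<Longrightarrow> upper_row i"
  unfolding old_col_succ_iff upper_row_def by auto

lemma finite_upper_rows: "finite {k. upper_row k \<and> Q k}"
  by (rule finite_subset[of _ "{..<q}"]) (auto simp: upper_row_def)

lemma upper_row_induct[consumes 1, case_names step]:
  assumes "upper_row i"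
    and step: "\<And>i. upper_row i \<Longrightarrow> (\<And>k. upper_row k \<Longrightarrow> i < k \<Longrightarrow> P k) \<Longrightarrow> P i"
  shows "P i"
  using assms(1)
proof (induction "q - i" arbitrary: i rule: less_induct)
  case less
  show ?case
  proof (rule step[OF less.prems])
    fix k assume "upper_row k" "i < k"
    then have "q - k < q - i" using upper_row_less[of k] by arith
    then show "P k" using less.hyps \<open>upper_row k\<close> by blast
  qed
qed

lemma new_col_succ_iff: "(i, Suc r) \<in> D \<longleftrightarrow> upper_row i"
  using new_diagram_iff[of i "Suc r"] old_col_r_iff by simp

lemma new_col_r_iff: "(i, r) \<in> D \<longleftrightarrow> (i, Suc r) \<in> D' \<or> i = q"
  using new_diagram_iff[of i r] by simp

lemma T_swapped: "T i (adj_swap r c) = (if i = q \<and> c = Suc r then t else T' i c)"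
  using T_eq[of i "adj_swap r c"] by (auto simp: adj_swap_cases split: if_splits)

lemma T_succ: "T i (Suc r) = T' i r" using T_eq[of i "Suc r"] by simp
lemma T_r: "i \<noteq> q \<Longrightarrow> T i r = T' i (Suc r)" using T_eq[of i r] by simp
lemma T_new_box: "T q r = t" using T_eq by simp
lemma T_other: "c \<noteq> r \<Longrightarrow> c \<noteq> Suc r \<Longrightarrow> T i c = T' i c" using T_eq[of i c] by simp

lemma old_to_new: "(i, j) \<in> D' \<Longrightarrow> (i, adj_swap r j) \<in> D \<and> T' i j = T i (adj_swap r j)"
  using new_of_old_box T_swapped old_box_q_succ by auto

lemma row_count_new:
  "row_count D T i c P = card {c''. ((i, c'') \<in> D' \<or> (i = q \<and> c'' = Suc r)) \<and> c < adj_swap r c'' \<and>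
     P (if i = q \<and> c'' = Suc r then t else T' i c'')}"
  unfolding row_count_def
  by (subst card_adj_swap[of _ r]) (simp add: new_diagram_swapped_iff T_swapped)

lemma col_count_new_other:
  "c \<noteq> r \<Longrightarrow> c \<noteq> Suc r \<Longrightarrow> col_count D T i c P = col_count D' T' i c P"
  unfolding col_count_def
  by (rule arg_cong[where f=card], rule Collect_cong) (simp add: new_diagram_iff T_eq)

lemma row_count_new_right: "Suc r < c \<Longrightarrow> row_count D T i c P = row_count D' T' i c P"
  unfolding row_count_new unfolding row_count_def
  by (rule arg_cong[where f=card], rule Collect_cong) (auto simp: adj_swap_less_above)

lemma row_count_new_left:
  "c < r \<Longrightarrow> row_count D T i c P = row_count D' T' i c P + (if i = q \<and> P t then 1 else 0)"
proof -
  assume c: "c < r"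
  have "row_count D T i c P = card {c''. c'' \<in> {c'. (i, c') \<in> D' \<and> c < c' \<and> P (T' i c')} \<or>
                                       (c'' = Suc r \<and> (i = q \<and> P t))}"
    unfolding row_count_new
    by (rule arg_cong[where f=card], rule Collect_cong)
      (use c old_box_q_succ in \<open>auto simp: adj_swap_less_below\<close>)
  also have "\<dots> = row_count D' T' i c P + (if i = q \<and> P t then 1 else 0)"
    unfolding row_count_def
    by (rule card_optional_element) (use old_box_q_succ in \<open>auto intro: finite_row_set\<close>)
  finally show ?thesis .
qed

lemma row_count_new_succ: "row_count D T i (Suc r) P = row_count D' T' i (Suc r) P"
  unfolding row_count_new unfolding row_count_def
  by (rule arg_cong[where f=card], rule Collect_cong) (auto simp: adj_swap_less_succ)

lemma col_count_new_succ: "col_count D T i (Suc r) P = col_count D' T' i r P"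
  unfolding col_count_def
  by (rule arg_cong[where f=card], rule Collect_cong) (simp add: new_diagram_iff T_eq)

lemma row_count_new_r:
  "row_count D T i r P =
     row_count D' T' i (Suc r) P + (if (i, r) \<in> D' \<and> P (T' i r) then 1 else 0)"
proof -
  have "row_count D T i r P = card {c''. c'' \<in> {c'. (i, c') \<in> D' \<and> Suc r < c' \<and> P (T' i c')} \<or>
                                       (c'' = r \<and> ((i, r) \<in> D' \<and> P (T' i r)))}"
    unfolding row_count_new
    by (rule arg_cong[where f=card], rule Collect_cong) (auto simp: adj_swap_less_r)
  also have "\<dots> = row_count D' T' i (Suc r) P + (if (i, r) \<in> D' \<and> P (T' i r) then 1 else 0)"
    unfolding row_count_def by (rule card_optional_element) (auto intro: finite_row_set)
  finally show ?thesis .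
qed

lemma col_count_new_r:
  "col_count D T i r P = col_count D' T' i (Suc r) P + (if i < q \<and> P t then 1 else 0)"
proof -
  have "col_count D T i r P = card {k. k \<in> {k. (k, Suc r) \<in> D' \<and> i < k \<and> P (T' k (Suc r))} \<or>
                                       (k = q \<and> (i < q \<and> P t))}"
    unfolding col_count_def
    by (rule arg_cong[where f=card], rule Collect_cong)
      (use old_box_q_succ in \<open>auto simp: new_diagram_iff T_eq\<close>)
  also have "\<dots> = col_count D' T' i (Suc r) P + (if i < q \<and> P t then 1 else 0)"
    unfolding col_count_def
    by (rule card_optional_element) (use old_box_q_succ in \<open>auto intro: finite_col_set\<close>)
  finally show ?thesis .
qed

lemma row_count_old_split:
  assumes "(i, Suc r) \<in> D'"
  shows "row_count D' T' i r P = row_count D' T' i (Suc r) P + (if P (T' i (Suc r)) then 1 else 0)"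
proof -
  have "row_count D' T' i r P = card {c''. c'' \<in> {c'. (i, c') \<in> D' \<and> Suc r < c' \<and> P (T' i c')} \<or>
                                         (c'' = Suc r \<and> P (T' i (Suc r)))}"
    unfolding row_count_def
  proof (rule arg_cong[where f=card], rule Collect_cong)
    fix c'
    show "((i, c') \<in> D' \<and> r < c' \<and> P (T' i c')) \<longleftrightarrow>
          (c' \<in> {c'. (i, c') \<in> D' \<and> Suc r < c' \<and> P (T' i c')} \<or> c' = Suc r \<and> P (T' i (Suc r)))"
      by (cases "c' = Suc r") (use assms in auto)
  qed
  also have "\<dots> = row_count D' T' i (Suc r) P + (if P (T' i (Suc r)) then 1 else 0)"
    unfolding row_count_def by (rule card_optional_element) (auto intro: finite_row_set)
  finally show ?thesis .
qed

lemma col_count_old_r: "col_count D' T' i r P = card {k. upper_row k \<and> i < k \<and> P (T' k r)}"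
  unfolding col_count_def old_col_r_iff by simp

lemma col_count_old_succ_ge:
  "card {k. upper_row k \<and> i < k \<and> P (T' k (Suc r))} \<le> col_count D' T' i (Suc r) P"
  unfolding col_count_def by (rule card_Collect_mono) (auto intro: finite_col_set upper_row_succ)

lemma col_count_old_r_le_succ:
  assumes "\<And>k. upper_row k \<Longrightarrow> i < k \<Longrightarrow> T' k (Suc r) \<le> T' k r"
    and "\<And>x x'. P x \<Longrightarrow> x' \<le> x \<Longrightarrow> P x'"
  shows "col_count D' T' i r P \<le> col_count D' T' i (Suc r) P"
proof -
  have "col_count D' T' i r P \<le> card {k. upper_row k \<and> i < k \<and> P (T' k (Suc r))}"
    unfolding col_count_old_r by (rule card_Collect_mono[OF finite_upper_rows]) (use assms in blast)
  also have "\<dots> \<le> col_count D' T' i (Suc r) P" by (rule col_count_old_succ_ge)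
  finally show ?thesis .
qed

lemma row_count_new_box: "row_count D T q r P = 0"
proof -
  have "{c'. (q, c') \<in> D \<and> r < c' \<and> P (T q c')} = {}"
  proof (rule ccontr)
    assume "{c'. (q, c') \<in> D \<and> r < c' \<and> P (T q c')} \<noteq> {}"
    then obtain c' where c': "(q, c') \<in> D" "r < c'" by auto
    then have "(q, adj_swap r c') \<in> D'" using new_diagram_iff by auto
    then have "adj_swap r c' < r" by (rule old_row_q_left)
    then show False using c' by (auto simp: adj_swap_cases split: if_splits)
  qed
  then show ?thesis unfolding row_count_def by (metis card.empty)
qed

(* Balance of T' on D' forces T' k (r + 1) \<le> T' k r in every upper row: otherwise the hook
   at (k, r) would see one more row entry above T' k r than the hook at (k, r + 1) allows. *)
lemma upper_row_order_old:
  assumes balD': "\<And>i c. (i, c) \<in> D' \<Longrightarrow> balanced_counts D' T' i c"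
    and "upper_row i"
  shows "T' i (Suc r) \<le> T' i r"
  using \<open>upper_row i\<close>
proof (induction i rule: upper_row_induct)
  case (step i)
  define x where "x = T' i (Suc r)"
  define y where "y = T' i r"
  show ?case
  proof (rule ccontr)
    assume "\<not> T' i (Suc r) \<le> T' i r"
    then have yx: "y < x" unfolding x_def y_def by simp
    have bal_r: "balanced_counts D' T' i r" using balD' step(1) old_col_r_iff by simp
    have bal_succ: "balanced_counts D' T' i (Suc r)" using balD' upper_row_succ[OF step(1)] by simp
    have "row_count D' T' i (Suc r) (\<lambda>v. y < v) + 1 = row_count D' T' i r (\<lambda>v. y < v)"
      using row_count_old_split[OF upper_row_succ[OF step(1)], of "\<lambda>v. y < v"] yx
      unfolding x_def by simp
    also have "\<dots> \<le> col_count D' T' i r (\<lambda>v. v \<le> y)"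
      using balanced_countsD(2)[OF bal_r] y_def by simp
    also have "\<dots> \<le> col_count D' T' i (Suc r) (\<lambda>v. v \<le> y)"
      by (rule col_count_old_r_le_succ) (use step(2) in auto)
    also have "\<dots> \<le> col_count D' T' i (Suc r) (\<lambda>v. v < x)"
      by (rule col_count_mono[OF finite_diagram]) (use yx in auto)
    also have "\<dots> \<le> row_count D' T' i (Suc r) (\<lambda>v. x \<le> v)"
      using balanced_countsD(1)[OF bal_succ] x_def by simp
    also have "\<dots> \<le> row_count D' T' i (Suc r) (\<lambda>v. y < v)"
      by (rule row_count_mono[OF finite_diagram]) (use yx in auto)
    finally show False by simp
  qed
qed

lemma upper_row_order_new:
  assumes balD: "\<And>i c. (i, c) \<in> D \<Longrightarrow> balanced_counts D T i c"
    and tmin: "\<And>i c. (i, c) \<in> D \<Longrightarrow> t \<le> T i c"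
    and "upper_row i"
  shows "T' i (Suc r) \<le> T' i r"
  using \<open>upper_row i\<close>
proof (induction i rule: upper_row_induct)
  case (step i)
  define x where "x = T' i (Suc r)"
  define y where "y = T' i r"
  have iq: "i \<noteq> q" "i < q" using upper_row_less[OF step(1)] by auto
  show ?case
  proof (rule ccontr)
    assume "\<not> T' i (Suc r) \<le> T' i r"
    then have yx: "y < x" unfolding x_def y_def by simp
    have in_succ: "(i, Suc r) \<in> D" using new_col_succ_iff step(1) by simp
    have in_r: "(i, r) \<in> D" using new_col_r_iff upper_row_succ[OF step(1)] by simp
    have T_succ_y: "T i (Suc r) = y" using T_succ y_def by simp
    have T_r_x: "T i r = x" using T_r[OF iq(1)] x_def by simp
    have ty: "t \<le> y" using tmin[OF in_succ] T_succ_y by simp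
    have "row_count D' T' i (Suc r) (\<lambda>v. y < v) \<le> col_count D' T' i r (\<lambda>v. v \<le> y)"
      using balanced_countsD(2)[OF balD[OF in_succ] T_succ_y]
        row_count_new_succ col_count_new_succ by simp
    also have "\<dots> \<le> col_count D' T' i (Suc r) (\<lambda>v. v \<le> y)"
      by (rule col_count_old_r_le_succ) (use step(2) in auto)
    also have "\<dots> \<le> col_count D' T' i (Suc r) (\<lambda>v. v < x)"
      by (rule col_count_mono[OF finite_diagram]) (use yx in auto)
    also have "\<dots> + 1 \<le> row_count D' T' i (Suc r) (\<lambda>v. x \<le> v)"
      using balanced_countsD(1)[OF balD[OF in_r] T_r_x]
        row_count_new_r[of i "\<lambda>v. x \<le> v"] col_count_new_r[of i "\<lambda>v. v < x"] iq ty yx y_def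
      by simp
    also have "\<dots> \<le> row_count D' T' i (Suc r) (\<lambda>v. y < v)"
      by (rule row_count_mono[OF finite_diagram]) (use yx in auto)
    finally show False by simp
  qed
qed

lemma lower_bound_new:
  assumes "\<And>i c. (i, c) \<in> D' \<Longrightarrow> t \<le> T' i c" and "(i, c) \<in> D"
  shows "t \<le> T i c"
proof (cases "i = q \<and> c = r")
  case True then show ?thesis using T_new_box by simp
next
  case False
  then show ?thesis using assms old_of_new_box[OF assms(2)] T_eq[of i c] by auto
qed

lemma lower_bound_old:
  assumes "\<And>i c. (i, c) \<in> D \<Longrightarrow> t \<le> T i c" and "(i, c) \<in> D'"
  shows "t \<le> T' i c"
  using assms old_to_new[OF assms(2)] by auto

(* Adding the box: if T' is balanced on D' and t is a lower bound of T', then T is balanced on D.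
   The columns r and r + 1 need the monotonicity of the upper rows. *)
context
  assumes balD': "\<And>i c. (i, c) \<in> D' \<Longrightarrow> balanced_counts D' T' i c"
    and tmin': "\<And>i c. (i, c) \<in> D' \<Longrightarrow> t \<le> T' i c"
begin

lemma balanced_new_box: "balanced_counts D T q r"
  using col_count_below_min[OF lower_bound_new[OF tmin'], where i=q and c=r] row_count_new_box T_new_box
  unfolding balanced_counts_def by simp

lemma balanced_new_other:
  assumes inD: "(i, c) \<in> D" and c: "c \<noteq> r" "c \<noteq> Suc r"
  shows "balanced_counts D T i c"
proof -
  have inD': "(i, c) \<in> D'" using old_of_new_box[OF inD] c by auto
  define y where "y = T' i c"
  have Ty: "T i c = y" using T_other c y_def by simp
  have ty: "t \<le> y" using tmin' inD' y_def by simp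
  have bal: "col_count D' T' i c (\<lambda>v. v < y) \<le> row_count D' T' i c (\<lambda>v. y \<le> v)"
      "row_count D' T' i c (\<lambda>v. y < v) \<le> col_count D' T' i c (\<lambda>v. v \<le> y)"
    using balanced_countsD[OF balD'[OF inD'] y_def[symmetric]] by auto
  consider "Suc r < c" | "c < r" using c by linarith
  then show ?thesis
  proof cases
    case 1
    then show ?thesis
      unfolding balanced_counts_def Ty using bal col_count_new_other[OF c] row_count_new_right[OF 1] by simp
  next
    case 2
    show ?thesis
    proof (rule balanced_countsI[where T=T and i=i and c=c, OF Ty])
      show "col_count D T i c (\<lambda>x. x < y) \<le> row_count D T i c (\<lambda>x. y \<le> x)"
        using bal col_count_new_other[OF c] row_count_new_left[OF 2] by simp
      show "row_count D T i c (\<lambda>x. y < x) \<le> col_count D T i c (\<lambda>x. x \<le> y)"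
        using bal col_count_new_other[OF c] row_count_new_left[OF 2, of i "\<lambda>x. y < x"] ty by simp
    qed
  qed
qed

lemma balanced_new_succ:
  assumes inD: "(i, Suc r) \<in> D"
  shows "balanced_counts D T i (Suc r)"
proof -
  have upper: "upper_row i" using new_col_succ_iff inD by simp
  have in_r: "(i, r) \<in> D'" using upper old_col_r_iff by simp
  have in_succ: "(i, Suc r) \<in> D'" using upper_row_succ[OF upper] .
  define y where "y = T' i r"
  define x where "x = T' i (Suc r)"
  have Ty: "T i (Suc r) = y" using T_succ y_def by simp
  have xy: "x \<le> y" using upper_row_order_old[OF balD' upper] x_def y_def by simp
  have bal: "col_count D' T' i r (\<lambda>v. v < y) \<le> row_count D' T' i r (\<lambda>v. y \<le> v)"
      "row_count D' T' i r (\<lambda>v. y < v) \<le> col_count D' T' i r (\<lambda>v. v \<le> y)"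
    using balanced_countsD[OF balD'[OF in_r] y_def[symmetric]] by auto
  have split_le: "row_count D' T' i r (\<lambda>v. y \<le> v) =
      row_count D' T' i (Suc r) (\<lambda>v. y \<le> v) + (if y \<le> x then 1 else 0)"
    using row_count_old_split[OF in_succ] x_def by simp
  have split_less: "row_count D' T' i r (\<lambda>v. y < v) =
      row_count D' T' i (Suc r) (\<lambda>v. y < v) + (if y < x then 1 else 0)"
    using row_count_old_split[OF in_succ] x_def by simp
  show ?thesis
  proof (rule balanced_countsI[where T=T and i=i and c="Suc r", OF Ty])
    show "row_count D T i (Suc r) (\<lambda>v. y < v) \<le> col_count D T i (Suc r) (\<lambda>v. v \<le> y)"
      using bal split_less row_count_new_succ col_count_new_succ by simp
    show "col_count D T i (Suc r) (\<lambda>v. v < y) \<le> row_count D T i (Suc r) (\<lambda>v. y \<le> v)"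
    proof (cases "x < y")
      case True then show ?thesis using bal split_le row_count_new_succ col_count_new_succ by simp
    next
      case False
      then have "x = y" using xy by simp
      have "col_count D' T' i r (\<lambda>v. v < y) \<le> col_count D' T' i (Suc r) (\<lambda>v. v < y)"
        by (rule col_count_old_r_le_succ) (use upper_row_order_old[OF balD'] in auto)
      also have "\<dots> \<le> row_count D' T' i (Suc r) (\<lambda>v. y \<le> v)"
        using balanced_countsD(1)[OF balD'[OF in_succ]] x_def \<open>x = y\<close> by simp
      finally show ?thesis using row_count_new_succ col_count_new_succ by simp
    qed
  qed
qed

lemma balanced_new_r:
  assumes inD: "(i, r) \<in> D" and iq: "i \<noteq> q"
  shows "balanced_counts D T i r"
proof -
  have in_succ: "(i, Suc r) \<in> D'" using new_col_r_iff inD iq by simp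
  define y where "y = T' i (Suc r)"
  have Ty: "T i r = y" using T_r iq y_def by simp
  have ty: "t \<le> y" using tmin' in_succ y_def by simp
  have bal: "col_count D' T' i (Suc r) (\<lambda>v. v < y) \<le> row_count D' T' i (Suc r) (\<lambda>v. y \<le> v)"
      "row_count D' T' i (Suc r) (\<lambda>v. y < v) \<le> col_count D' T' i (Suc r) (\<lambda>v. v \<le> y)"
    using balanced_countsD[OF balD'[OF in_succ] y_def[symmetric]] by auto
  consider "upper_row i" "(i, r) \<in> D'" "i < q" | "(i, r) \<notin> D'" "\<not> i < q"
    using old_col_r_iff upper_row_less upper_rowI[OF in_succ] by blast
  then show ?thesis
  proof cases
    case 1
    have y_le: "y \<le> T' i r" using upper_row_order_old[OF balD' 1(1)] y_def by simp
    show ?thesis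
    proof (rule balanced_countsI[where T=T and i=i and c=r, OF Ty])
      show "col_count D T i r (\<lambda>v. v < y) \<le> row_count D T i r (\<lambda>v. y \<le> v)"
        using bal 1 y_le row_count_new_r[of i "\<lambda>v. y \<le> v"] col_count_new_r[of i "\<lambda>v. v < y"]
        by simp
      show "row_count D T i r (\<lambda>v. y < v) \<le> col_count D T i r (\<lambda>v. v \<le> y)"
        using bal 1 ty row_count_new_r[of i "\<lambda>v. y < v"] col_count_new_r[of i "\<lambda>v. v \<le> y"]
        by simp
    qed
  next
    case 2
    then show ?thesis
      unfolding balanced_counts_def Ty using bal row_count_new_r[of i] col_count_new_r[of i] by simp
  qed
qed

lemma balanced_new: "(i, c) \<in> D \<Longrightarrow> balanced_counts D T i c"
  using balanced_new_box balanced_new_other balanced_new_succ balanced_new_r by blast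

end

context
  assumes balD: "\<And>i c. (i, c) \<in> D \<Longrightarrow> balanced_counts D T i c"
    and tmin: "\<And>i c. (i, c) \<in> D \<Longrightarrow> t \<le> T i c"
    and row_q: "\<And>c. (q, c) \<in> D' \<Longrightarrow> T' q c \<noteq> t"
begin

lemma balanced_old_other:
  assumes inD': "(i, c) \<in> D'" and c: "c \<noteq> r" "c \<noteq> Suc r"
  shows "balanced_counts D' T' i c"
proof -
  have inD: "(i, c) \<in> D" using new_of_old_box[OF inD'] c by simp
  define y where "y = T' i c"
  have Ty: "T i c = y" using T_other c y_def by simp
  have bal: "col_count D T i c (\<lambda>v. v < y) \<le> row_count D T i c (\<lambda>v. y \<le> v)"
      "row_count D T i c (\<lambda>v. y < v) \<le> col_count D T i c (\<lambda>v. v \<le> y)"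
    using balanced_countsD[OF balD[OF inD] Ty] by auto
  consider "Suc r < c" | "c < r" using c by linarith
  then show ?thesis
  proof cases
    case 1
    then show ?thesis
      unfolding balanced_counts_def y_def[symmetric]
      using bal col_count_new_other[OF c] row_count_new_right[OF 1] by simp
  next
    case 2
    have ty: "i = q \<Longrightarrow> t < y" using lower_bound_old[OF tmin inD'] row_q inD' y_def by fastforce
    show ?thesis
    proof (rule balanced_countsI[where T=T' and i=i and c=c, OF y_def[symmetric]])
      show "col_count D' T' i c (\<lambda>x. x < y) \<le> row_count D' T' i c (\<lambda>x. y \<le> x)"
        using bal col_count_new_other[OF c] row_count_new_left[OF 2, of i "\<lambda>x. y \<le> x"] ty
        by (cases "i = q") auto
      show "row_count D' T' i c (\<lambda>x. y < x) \<le> col_count D' T' i c (\<lambda>x. x \<le> y)"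
        using bal col_count_new_other[OF c] row_count_new_left[OF 2, of i "\<lambda>x. y < x"] by simp
    qed
  qed
qed

lemma balanced_old_r:
  assumes inD': "(i, r) \<in> D'"
  shows "balanced_counts D' T' i r"
proof -
  have upper: "upper_row i" using old_col_r_iff inD' by simp
  have in_succ: "(i, Suc r) \<in> D'" using upper_row_succ[OF upper] .
  have inD: "(i, Suc r) \<in> D" using new_col_succ_iff upper by simp
  define y where "y = T' i r"
  define x where "x = T' i (Suc r)"
  have Ty: "T i (Suc r) = y" using T_succ y_def by simp
  have xy: "x \<le> y" using upper_row_order_new[OF balD tmin upper] x_def y_def by simp
  have bal: "col_count D' T' i r (\<lambda>v. v < y) \<le> row_count D' T' i (Suc r) (\<lambda>v. y \<le> v)"
      "row_count D' T' i (Suc r) (\<lambda>v. y < v) \<le> col_count D' T' i r (\<lambda>v. v \<le> y)"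
    using balanced_countsD[OF balD[OF inD] Ty] row_count_new_succ col_count_new_succ by auto
  have "row_count D' T' i r (\<lambda>v. y \<le> v) =
      row_count D' T' i (Suc r) (\<lambda>v. y \<le> v) + (if y \<le> x then 1 else 0)"
    "row_count D' T' i r (\<lambda>v. y < v) =
      row_count D' T' i (Suc r) (\<lambda>v. y < v) + (if y < x then 1 else 0)"
    using row_count_old_split[OF in_succ] x_def by simp_all
  then show ?thesis
    unfolding balanced_counts_def y_def[symmetric] using bal xy by simp
qed

lemma balanced_old_succ_upper:
  assumes upper: "upper_row i"
  shows "balanced_counts D' T' i (Suc r)"
proof -
  have iq: "i \<noteq> q" "i < q" and in_r: "(i, r) \<in> D'"
    using upper_row_less[OF upper] old_col_r_iff upper by auto
  have inD: "(i, r) \<in> D" using new_col_r_iff upper_row_succ[OF upper] by simp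
  define y where "y = T' i (Suc r)"
  define z where "z = T' i r"
  have Ty: "T i r = y" using T_r[OF iq(1)] y_def by simp
  have ty: "t \<le> y" using tmin[OF inD] Ty by simp
  have yz: "y \<le> z" using upper_row_order_new[OF balD tmin upper] y_def z_def by simp
  have bal: "col_count D T i r (\<lambda>v. v < y) \<le> row_count D T i r (\<lambda>v. y \<le> v)"
      "row_count D T i r (\<lambda>v. y < v) \<le> col_count D T i r (\<lambda>v. v \<le> y)"
    using balanced_countsD[OF balD[OF inD] Ty] by auto
  show ?thesis
  proof (rule balanced_countsI[where T=T' and i=i and c="Suc r", OF y_def[symmetric]])
    show "col_count D' T' i (Suc r) (\<lambda>v. v < y) \<le> row_count D' T' i (Suc r) (\<lambda>v. y \<le> v)"
    proof (cases "t < y")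
      case True
      then show ?thesis
        using bal in_r iq row_count_new_r[of i "\<lambda>v. y \<le> v"] col_count_new_r[of i "\<lambda>v. v < y"]
        by (auto split: if_splits)
    next
      case False
      then have "t = y" using ty by simp
      then show ?thesis
        using col_count_below_min[OF lower_bound_old[OF tmin], where i=i and c="Suc r"] by simp
    qed
    show "row_count D' T' i (Suc r) (\<lambda>v. y < v) \<le> col_count D' T' i (Suc r) (\<lambda>v. v \<le> y)"
    proof (cases "y < z")
      case True
      then show ?thesis
        using bal in_r iq ty z_def row_count_new_r[of i "\<lambda>v. y < v"] col_count_new_r[of i "\<lambda>v. v \<le> y"]
        by simp
    next
      case False
      then have Tz: "T i (Suc r) = y" using yz T_succ z_def by simp
      have "row_count D' T' i (Suc r) (\<lambda>v. y < v) \<le> col_count D' T' i r (\<lambda>v. v \<le> y)"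
        using balanced_countsD(2)[OF balD Tz] new_col_succ_iff upper
          row_count_new_succ col_count_new_succ by simp
      also have "\<dots> \<le> col_count D' T' i (Suc r) (\<lambda>v. v \<le> y)"
        by (rule col_count_old_r_le_succ) (use upper_row_order_new[OF balD tmin] in auto)
      finally show ?thesis .
    qed
  qed
qed

lemma balanced_old_succ:
  assumes inD': "(i, Suc r) \<in> D'"
  shows "balanced_counts D' T' i (Suc r)"
proof (cases "upper_row i")
  case True then show ?thesis by (rule balanced_old_succ_upper)
next
  case False
  have iq: "i \<noteq> q" using inD' old_box_q_succ by auto
  have inD: "(i, r) \<in> D" using new_col_r_iff inD' by simp
  define y where "y = T' i (Suc r)"
  have Ty: "T i r = y" using T_r[OF iq] y_def by simp
  have "(i, r) \<notin> D'" "\<not> i < q" using False old_col_r_iff upper_rowI inD' by auto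
  then show ?thesis
    unfolding balanced_counts_def y_def[symmetric]
    using balanced_countsD[OF balD[OF inD] Ty] row_count_new_r[of i] col_count_new_r[of i] by simp
qed

lemma balanced_old: "(i, c) \<in> D' \<Longrightarrow> balanced_counts D' T' i c"
  using balanced_old_other balanced_old_r balanced_old_succ by blast

end

lemma new_to_old: "(i, j) \<in> D \<Longrightarrow> (i, j) \<noteq> (q, r) \<Longrightarrow>
    (i, adj_swap r j) \<in> D' \<and> T i j = T' i (adj_swap r j)"
  using old_of_new_box T_eq by auto

(* The flag condition -j \<le> T i j survives the exchange of columns r and r + 1 because every
   entry is at least t \<ge> -r. *)
lemma entry_bounds_new:
  assumes B': "is_BSL n w' T'" and t0: "t < 0" and tr: "- int r \<le> t"
    and tmin': "\<And>i c. (i, c) \<in> D' \<Longrightarrow> t \<le> T' i c" and h: "(i, j) \<in> D"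
  shows "T i j \<noteq> 0 \<and> - int j \<le> T i j \<and> T i j \<le> int i"
proof (cases "(i, j) = (q, r)")
  case True then show ?thesis using T_new_box t0 tr by auto
next
  case False
  note old = new_to_old[OF h False]
  have "- int (adj_swap r j) \<le> T' i (adj_swap r j)" using BSL_entry[OF B' old[THEN conjunct1]] by simp
  moreover have "j = r \<Longrightarrow> - int r \<le> T' i (Suc r)" using tmin' old tr by fastforce
  ultimately have "- int j \<le> T' i (adj_swap r j)" by (auto simp: adj_swap_cases split: if_splits)
  then show ?thesis using BSL_entry[OF B' old[THEN conjunct1]] old by simp
qed

lemma entry_bounds_old:
  assumes B: "is_BSL n (adj_swap r \<circ> w') T" and tr: "- int r \<le> t"
    and tmin: "\<And>i c. (i, c) \<in> D \<Longrightarrow> t \<le> T i c" and h: "(i, j) \<in> D'"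
  shows "T' i j \<noteq> 0 \<and> - int j \<le> T' i j \<and> T' i j \<le> int i"
proof -
  note new = old_to_new[OF h]
  have "- int (adj_swap r j) \<le> T i (adj_swap r j)" using BSL_entry[OF B new[THEN conjunct1]] by simp
  moreover have "j = r \<Longrightarrow> - int r \<le> T i (Suc r)" using tmin new tr by fastforce
  ultimately have "- int j \<le> T i (adj_swap r j)" by (auto simp: adj_swap_cases split: if_splits)
  then show ?thesis using BSL_entry[OF B new[THEN conjunct1]] new by simp
qed

lemma BSL_add_box:
  assumes B': "is_BSL n w' T'" and t0: "t < 0" and tr: "- int r \<le> t"
    and tmin': "\<And>i c. (i, c) \<in> D' \<Longrightarrow> t \<le> T' i c"
    and row_q: "\<And>c. (q, c) \<in> D' \<Longrightarrow> T' q c \<noteq> t"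
  shows "is_BSL n (adj_swap r \<circ> w') T"
proof (rule is_BSLI)
  fix i j assume "(i, j) \<notin> D"
  then have "\<not> (i = q \<and> j = r)" "(i, adj_swap r j) \<notin> D'" using new_diagram_iff[of i j] by auto
  then show "T i j = 0" using T_eq[of i j] BSL_outside[OF B'] by auto
next
  fix i j assume "(i, j) \<in> D"
  then show "T i j \<noteq> 0 \<and> - int j \<le> T i j \<and> T i j \<le> int i"
    using entry_bounds_new[OF B' t0 tr tmin'] by blast
next
  fix i j assume "(i, j) \<in> D"
  then show "balanced_counts D T i j" using balanced_new[OF BSL_balanced[OF B'] tmin'] by blast
next
  fix i j i' assume h: "(i, j) \<in> D" "(i', j) \<in> D" "i \<noteq> i'" "T i j = T i' j"
  show "T i j \<le> 0"
  proof (cases "(i, j) = (q, r) \<or> (i', j) = (q, r)")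
    case True
    then have "T i j = t" using T_new_box h by auto
    then show ?thesis using t0 by simp
  next
    case False
    then show ?thesis using new_to_old h BSL_col[OF B'] by metis
  qed
next
  fix i j j' assume h: "(i, j) \<in> D" "(i, j') \<in> D" "j \<noteq> j'" "T i j = T i j'"
  show "0 \<le> T i j"
  proof (cases "(i, j) = (q, r) \<or> (i, j') = (q, r)")
    case True
    (* the repeated letter would be t, recurring in row q of D' *)
    then obtain c where c: "(q, c) \<in> D" "c \<noteq> r" "T q c = t" using h T_new_box by auto
    then have "(q, adj_swap r c) \<in> D'" "T' q (adj_swap r c) = t" using new_to_old by auto
    then show ?thesis using row_q by blast
  next
    case False
    then have "adj_swap r j \<noteq> adj_swap r j'" using h by (simp add: adj_swap_eq_iff)
    then show ?thesis using new_to_old h False BSL_row[OF B'] by metis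
  qed
qed

lemma new_letter_not_in_old_row:
  assumes B: "is_BSL n (adj_swap r \<circ> w') T" and t0: "t < 0" and h: "(q, c) \<in> D'"
  shows "T' q c \<noteq> t"
proof
  assume "T' q c = t"
  moreover have box: "(q, r) \<in> D" using new_diagram_iff by simp
  moreover have "adj_swap r c \<noteq> r" using h old_box_q_succ by (auto simp: adj_swap_cases split: if_splits)
  ultimately show False
    using BSL_row[OF B old_to_new[OF h, THEN conjunct1] box] old_to_new[OF h] T_new_box t0 by auto
qed

lemma BSL_remove_box:
  assumes B: "is_BSL n (adj_swap r \<circ> w') T" and t0: "t < 0"
    and tmin: "\<And>i c. (i, c) \<in> D \<Longrightarrow> t \<le> T i c"
    and vacated: "T' q (Suc r) = 0"
  shows "is_BSL n w' T'"
proof -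
  have box: "(q, r) \<in> D" using new_diagram_iff by simp
  have tr: "- int r \<le> t" using BSL_entry[OF B box] T_new_box by simp
  note row_q = new_letter_not_in_old_row[OF B t0]
  show ?thesis
  proof (rule is_BSLI)
    fix i j assume h: "(i, j) \<notin> D'"
    show "T' i j = 0"
    proof (cases "i = q \<and> j = Suc r")
      case True then show ?thesis using vacated by simp
    next
      case False
      then have "(i, adj_swap r j) \<notin> D" using new_diagram_swapped_iff h by simp
      then show ?thesis using BSL_outside[OF B] T_swapped[of i j] False by simp
    qed
  next
    fix i j assume "(i, j) \<in> D'"
    then show "T' i j \<noteq> 0 \<and> - int j \<le> T' i j \<and> T' i j \<le> int i"
      using entry_bounds_old[OF B tr tmin] by blast
  next
    fix i j assume "(i, j) \<in> D'"
    then show "balanced_counts D' T' i j" using balanced_old[OF BSL_balanced[OF B] tmin row_q] by blast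
  next
    fix i j i' assume "(i, j) \<in> D'" "(i', j) \<in> D'" "i \<noteq> i'" "T' i j = T' i' j"
    then show "T' i j \<le> 0" using old_to_new BSL_col[OF B] by metis
  next
    fix i j j' assume h: "(i, j) \<in> D'" "(i, j') \<in> D'" "j \<noteq> j'" "T' i j = T' i j'"
    then have "adj_swap r j \<noteq> adj_swap r j'" by (simp add: adj_swap_eq_iff)
    then show "0 \<le> T' i j" using h old_to_new BSL_row[OF B] by metis
  qed
qed

end

section \<open>The minimal marked letter\<close>

(* If a box (i, j) carries the minimal label t < 0 of a BSL and no box with label t lies below it,
   then row i of D(w) ends at column j: the hook at (i, j) has no column entry \<le> t, so by
   balance no row entry > t, and a marked letter cannot repeat in a row. *)
lemma row_ends_at_lowest_minimum:
  assumes B: "is_BSL n w T" and ij: "(i, j) \<in> diagram n w" "T i j = t" and t0: "t < 0"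
    and tmin: "\<And>k c. (k, c) \<in> diagram n w \<Longrightarrow> t \<le> T k c"
    and lowest: "\<And>k c. (k, c) \<in> diagram n w \<Longrightarrow> T k c = t \<Longrightarrow> k \<le> i"
    and right: "j < c"
  shows "(i, c) \<notin> diagram n w"
proof
  let ?D = "diagram n w"
  assume c: "(i, c) \<in> ?D"
  have "{k. (k, j) \<in> ?D \<and> i < k \<and> T k j \<le> t} = {}"
    using tmin lowest by (force simp: order.antisym)
  then have "col_count ?D T i j (\<lambda>v. v \<le> t) = 0" unfolding col_count_def by (metis card.empty)
  then have no_larger: "row_count ?D T i j (\<lambda>v. t < v) = 0"
    using balanced_countsD(2)[OF BSL_balanced[OF B ij(1)] ij(2)] by simp
  have "T i c \<noteq> t"
  proof
    assume "T i c = t"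
    then have "0 \<le> T i j" using BSL_row[OF B ij(1) c] right ij(2) by simp
    then show False using ij(2) t0 by simp
  qed
  then have "c \<in> {c'. (i, c') \<in> ?D \<and> j < c' \<and> t < T i c'}" using c right tmin[OF c] by simp
  moreover have "finite {c'. (i, c') \<in> ?D \<and> j < c' \<and> t < T i c'}" by (rule finite_row_set) simp
  ultimately have "0 < row_count ?D T i j (\<lambda>v. t < v)" unfolding row_count_def using card_gt_0_iff by blast
  then show False using no_larger by simp
qed

(* A box (i, j) carrying the minimal label t < 0 at the end of its row yields a box (m, j)
   with label t and w m = j + 1: either m = i, or m = w^-1(j + 1) lies above i and the hook at
   (m, j) is a pure column, so balance forbids entries below T m j under it. *)
lemma minimum_at_descent_box:
  assumes w: "w permutes {1..n}" and B: "is_BSL n w T"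
    and ij: "(i, j) \<in> diagram n w" "T i j = t"
    and tmin: "\<And>k c. (k, c) \<in> diagram n w \<Longrightarrow> t \<le> T k c"
    and row_end: "(i, Suc j) \<notin> diagram n w"
  obtains m where "(m, j) \<in> diagram n w" "w m = Suc j" "T m j = t"
proof (cases "w i = Suc j")
  case True then show ?thesis using that ij by blast
next
  case False
  let ?D = "diagram n w"
  have ijd: "1 \<le> i" "1 \<le> j" "j \<le> n" "i < inv w j" "j < w i" using ij(1) unfolding diagram_iff[OF w] by auto
  have "i \<in> {1..n}" using ijd permutes_in_image[OF permutes_inv[OF w], of j] by simp
  then have wi: "w i \<le> n" using permutes_in_image[OF w, of i] by simp
  have succ_j: "Suc j < w i" using ijd False by simp
  define m where "m = inv w (Suc j)"
  have wm: "w m = Suc j" unfolding m_def using permutes_inverses[OF w] by simp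
  have m_range: "m \<in> {1..n}"
    unfolding m_def using permutes_in_image[OF permutes_inv[OF w], of "Suc j"] succ_j wi by auto
  have "\<not> i < m" using row_end unfolding diagram_iff[OF w] m_def using ijd succ_j wi by auto
  moreover have "m \<noteq> i" using wm False by auto
  ultimately have mi: "m < i" by simp
  have mD: "(m, j) \<in> ?D" unfolding diagram_iff[OF w] using m_range mi ijd wm by auto
  have "{c'. (m, c') \<in> ?D \<and> j < c' \<and> T m j \<le> T m c'} = {}"
    unfolding diagram_iff[OF w] using wm by auto
  then have "row_count ?D T m j (\<lambda>v. T m j \<le> v) = 0" unfolding row_count_def by (metis card.empty)
  then have no_smaller: "col_count ?D T m j (\<lambda>v. v < T m j) = 0"
    using balanced_countsD(1)[OF BSL_balanced[OF B mD] refl] by simp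
  have "T m j \<le> t"
  proof (rule ccontr)
    assume "\<not> T m j \<le> t"
    then have "i \<in> {k. (k, j) \<in> ?D \<and> m < k \<and> T k j < T m j}" using ij mi by simp
    moreover have "finite {k. (k, j) \<in> ?D \<and> m < k \<and> T k j < T m j}" by (rule finite_col_set) simp
    ultimately have "0 < col_count ?D T m j (\<lambda>v. v < T m j)"
      unfolding col_count_def using card_gt_0_iff by blast
    then show False using no_smaller by simp
  qed
  then show ?thesis using that mD wm tmin[OF mD] by simp
qed

lemma minimal_marked_box:
  assumes w: "w permutes {1..n}" and B: "is_BSL n w T"
    and neg: "(i0, j0) \<in> diagram n w" "T i0 j0 < 0"
  obtains q r where "(q, r) \<in> diagram n w" "w q = Suc r" "T q r < 0"
    "\<And>i c. (i, c) \<in> diagram n w \<Longrightarrow> T q r \<le> T i c"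
proof -
  let ?D = "diagram n w"
  define t where "t = Min ((\<lambda>(i, c). T i c) ` ?D)"
  have tmin: "\<And>i c. (i, c) \<in> ?D \<Longrightarrow> t \<le> T i c"
    unfolding t_def by (auto intro: Min_le)
  have "t \<in> (\<lambda>(i, c). T i c) ` ?D" unfolding t_def using neg(1) by (intro Min_in) auto
  then have M_ne: "{p \<in> ?D. T (fst p) (snd p) = t} \<noteq> {}" by auto
  have t0: "t < 0" using tmin[OF neg(1)] neg(2) by simp
  define i where "i = Max (fst ` {p \<in> ?D. T (fst p) (snd p) = t})"
  have "i \<in> fst ` {p \<in> ?D. T (fst p) (snd p) = t}" unfolding i_def using M_ne by (intro Max_in) auto
  then obtain j where ij: "(i, j) \<in> ?D" "T i j = t" by auto
  have lowest: "k \<le> i" if "(k, c) \<in> ?D" "T k c = t" for k c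
    unfolding i_def using that by (intro Max_ge) (auto intro: rev_image_eqI)
  have "(i, Suc j) \<notin> ?D" using row_ends_at_lowest_minimum[OF B ij t0 tmin lowest, where c="Suc j"] by simp
  then obtain m where "(m, j) \<in> ?D" "w m = Suc j" "T m j = t"
    using minimum_at_descent_box[OF w B ij tmin] by blast
  then show ?thesis using that t0 tmin by simp
qed

section \<open>A permutation is determined by its code\<close>

lemma row_diagram:
  assumes v: "v permutes {1..n}" and i: "1 \<le> i" "i \<le> n"
  shows "{c. (i, c) \<in> diagram n v} = {1..<v i} - v ` {1..<i}"
proof -
  have vi: "v i \<in> {1..n}" using i permutes_in_image[OF v] by auto
  show ?thesis
  proof (rule set_eqI, rule iffI)
    fix c assume "c \<in> {c. (i, c) \<in> diagram n v}"
    then have c: "1 \<le> c" "c \<le> n" "i < inv v c" "c < v i" unfolding diagram_iff[OF v] by auto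
    have "c \<notin> v ` {1..<i}"
    proof
      assume "c \<in> v ` {1..<i}"
      then obtain k where k: "k < i" "c = v k" by auto
      then have "inv v c = k" using permutes_inverses[OF v] by simp
      then show False using c k by simp
    qed
    then show "c \<in> {1..<v i} - v ` {1..<i}" using c by auto
  next
    fix c assume c: "c \<in> {1..<v i} - v ` {1..<i}"
    have cn: "c \<in> {1..n}" using c vi by auto
    have ic: "inv v c \<in> {1..n}" using cn permutes_in_image[OF permutes_inv[OF v]] by auto
    have "v (inv v c) = c" using permutes_inverses[OF v] by auto
    moreover have "inv v c \<noteq> i" using c \<open>v (inv v c) = c\<close> by auto
    moreover have "\<not> inv v c < i"
    proof
      assume "inv v c < i"
      then have "inv v c \<in> {1..<i}" using ic by auto
      then have "v (inv v c) \<in> v ` {1..<i}" by (rule imageI)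
      then show False using c \<open>v (inv v c) = c\<close> by simp
    qed
    ultimately have "i < inv v c" by simp
    then show "c \<in> {c. (i, c) \<in> diagram n v}" unfolding diagram_iff[OF v] using c cn i by auto
  qed
qed

lemma card_columns_below_strict_mono:
  fixes x y :: nat
  assumes "x < y" "x \<notin> A" "1 \<le> x"
  shows "card ({1..<x} - A) < card ({1..<y} - A)"
proof (rule psubset_card_mono)
  show "{1..<x} - A \<subset> {1..<y} - A" using assms by auto
qed simp

(* A permutation is determined by the row lengths of its diagram (its Lehmer code): by induction
   on i, the values v 1, ..., v (i - 1) agree, and then v i is the unique column c outside them
   such that |{1..<c} - {v 1, ..., v (i - 1)}| is the length of row i. *)
lemma rows_determine:
  assumes v1: "v1 permutes {1..n}" and v2: "v2 permutes {1..n}"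
    and rows: "\<And>i. 1 \<le> i \<Longrightarrow> i \<le> n \<Longrightarrow>
                 card {c. (i, c) \<in> diagram n v1} = card {c. (i, c) \<in> diagram n v2}"
  shows "v1 = v2"
proof -
  have "v1 i = v2 i" if "1 \<le> i" "i \<le> n" for i
    using that
  proof (induction i rule: less_induct)
    case (less i)
    define A where "A = v1 ` {1..<i}"
    have A2: "v2 ` {1..<i} = A" unfolding A_def using less by (intro image_cong) auto
    have fresh: "v1 i \<notin> A" "v2 i \<notin> A"
      using inj_image_mem_iff[OF permutes_inj[OF v1], of i "{1..<i}"]
        inj_image_mem_iff[OF permutes_inj[OF v2], of i "{1..<i}"]
      unfolding A_def[symmetric] A2 by auto
    have pos: "1 \<le> v1 i" "1 \<le> v2 i"
      using less.prems permutes_in_image[OF v1] permutes_in_image[OF v2] by auto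
    have eq: "card ({1..<v1 i} - A) = card ({1..<v2 i} - A)"
      using rows[OF less.prems]
      unfolding row_diagram[OF v1 less.prems] row_diagram[OF v2 less.prems] A2 A_def[symmetric] .
    show ?case
    proof (rule ccontr)
      assume "v1 i \<noteq> v2 i"
      then consider "v1 i < v2 i" | "v2 i < v1 i" by linarith
      then show False
      proof cases
        case 1 then show False using card_columns_below_strict_mono[OF 1 fresh(1) pos(1)] eq by simp
      next
        case 2 then show False using card_columns_below_strict_mono[OF 2 fresh(2) pos(2)] eq by simp
      qed
    qed
  qed
  then show ?thesis
  proof (intro ext)
    fix x show "v1 x = v2 x"
      using permutes_not_in[OF v1, of x] permutes_not_in[OF v2, of x] \<open>\<And>i. 1 \<le> i \<Longrightarrow> i \<le> n \<Longrightarrow> v1 i = v2 i\<close>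
      by (cases "x \<in> {1..n}") auto
  qed
qed

lemma diagram_empty_id:
  assumes "u permutes {1..n}" and "diagram n u = {}"
  shows "u = id"
  by (rule rows_determine[OF assms(1) permutes_id]) (simp add: assms(2) diagram_id)

section \<open>Combining a marked and an unmarked labeling\<close>

definition combine :: "(nat \<Rightarrow> nat) \<Rightarrow> (nat \<Rightarrow> nat) \<Rightarrow> labeling \<Rightarrow> labeling \<Rightarrow> labeling" where
  "combine u v Tu Tv = (\<lambda>i j. Tu (v i) j + Tv i (inv u j))"

lemma arr_add_eq_combine:
  assumes "v permutes S"
  shows "arr_add (perm_act_right Tu (inv v)) (perm_act_left (inv u) Tv) = combine u v Tu Tv"
  unfolding arr_add_def perm_act_right_def perm_act_left_def combine_def
  using inv_inv_eq[OF permutes_bij[OF assms]] by simp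

(* The diagrams of u (moved by v) and of v (moved by u) are disjoint: (v i, j) \<in> D(u) says
   v i < u^-1 j, while (i, u^-1 j) \<in> D(v) says u^-1 j < v i. *)
lemma diagrams_disjoint:
  assumes u: "u permutes {1..n}" and v: "v permutes {1..n}" and "(v i, j) \<in> diagram n u"
  shows "(i, inv u j) \<notin> diagram n v"
  using assms(3) unfolding diagram_iff[OF u] diagram_iff[OF v] by auto

lemma marked_BSL_lower_bound:
  assumes "is_BSL n w T" "t < 0" "\<And>i c. (i, c) \<in> diagram n w \<Longrightarrow> t \<le> T i c"
  shows "t \<le> T a b"
  using assms BSL_outside[OF assms(1), of a b] by (cases "(a, b) \<in> diagram n w") auto

lemma unmarked_BSL_nonneg:
  assumes "is_BSL n v Tv" "\<And>i c. (i, c) \<in> diagram n v \<Longrightarrow> 0 < Tv i c"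
  shows "0 \<le> Tv a b"
  using assms BSL_outside[OF assms(1), of a b] by (cases "(a, b) \<in> diagram n v") (auto intro: less_imp_le)

context adjacent_swap begin

lemma marked_new: "t < 0 \<Longrightarrow> (\<And>i c. (i, c) \<in> D' \<Longrightarrow> T' i c < 0) \<Longrightarrow> (i, c) \<in> D \<Longrightarrow> T i c < 0"
  using new_to_old T_new_box by (cases "(i, c) = (q, r)") auto

lemma marked_old: "(\<And>i c. (i, c) \<in> D \<Longrightarrow> T i c < 0) \<Longrightarrow> (i, c) \<in> D' \<Longrightarrow> T' i c < 0"
  using old_to_new by auto

lemma combine_adj_swap:
  assumes v: "v permutes {1..n}" and Bv: "is_BSL n v Tv"
  shows "combine (adj_swap r \<circ> w') v T Tv =
         (\<lambda>i j. if i = inv (w' \<circ> v) r \<and> j = r then t else combine w' v T' Tv i (adj_swap r j))"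
proof (intro ext)
  fix i j
  have inv_wv: "inv (w' \<circ> v) r = inv v q" using o_inv_distrib[OF permutes_bij[OF w'] permutes_bij[OF v]] by simp
  have vi: "v i = q \<longleftrightarrow> i = inv (w' \<circ> v) r" unfolding inv_wv using permutes_inverses[OF v] by metis
  have inv_sw: "inv (adj_swap r \<circ> w') j = inv w' (adj_swap r j)" using inv_adj_swap_comp[OF w'] by simp
  show "combine (adj_swap r \<circ> w') v T Tv i j =
        (if i = inv (w' \<circ> v) r \<and> j = r then t else combine w' v T' Tv i (adj_swap r j))"
  proof (cases "i = inv (w' \<circ> v) r \<and> j = r")
    case True
    then have "(i, inv w' (Suc r)) \<notin> diagram n v"
      using vi asc unfolding diagram_iff[OF v] by auto
    then show ?thesis using True vi inv_sw BSL_outside[OF Bv] T_new_box by (simp add: combine_def)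
  next
    case False
    then show ?thesis using vi inv_sw T_eq[of "v i" j] by (auto simp: combine_def)
  qed
qed

end

lemma peel_minimal_letter:
  assumes w: "w permutes {1..n}" and B: "is_BSL n w T"
    and neg: "(i0, j0) \<in> diagram n w" "T i0 j0 < 0"
  obtains r t w' T' where "w' permutes {1..n}" "adj_swap r \<circ> w' = w" "adjacent_swap n w' r t T T'"
    "is_BSL n w' T'" "t < 0" "- int r \<le> t" "\<And>i c. t \<le> T i c"
    "\<And>c. c \<noteq> r \<Longrightarrow> T (inv w' r) c \<noteq> t"
proof -
  obtain q r where box: "(q, r) \<in> diagram n w" and wq: "w q = Suc r" and t0: "T q r < 0"
    and tmin: "\<And>i c. (i, c) \<in> diagram n w \<Longrightarrow> T q r \<le> T i c"
    using minimal_marked_box[OF w B neg] by blast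
  define t where "t = T q r"
  have r: "1 \<le> r" "Suc r \<le> n" "q < inv w r"
    using box permutes_in_image[OF w, of q] permutes_in_image[OF permutes_inv[OF w], of r]
    unfolding diagram_iff[OF w] wq by auto
  have q: "inv w (Suc r) = q" using wq permutes_inverses[OF w] by metis
  define w' where "w' = adj_swap r \<circ> w"
  have w': "w' permutes {1..n}" unfolding w'_def by (rule permutes_compose[OF w adj_swap_permutes[OF r(1,2)]])
  have inv_w': "inv w' x = inv w (adj_swap r x)" for x unfolding w'_def using inv_adj_swap_comp[OF w] by simp
  have w'q: "inv w' r = q" using inv_w' q by simp
  have w_eq: "adj_swap r \<circ> w' = w" unfolding w'_def by simp
  define T' where "T' = (\<lambda>i j. if i = q \<and> adj_swap r j = r then 0 else T i (adj_swap r j))"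
  have A: "adjacent_swap n w' r t T T'"
    unfolding adjacent_swap_def using w' r inv_w' q by (auto simp: w'q T'_def t_def)
  have "is_BSL n w' T'"
    by (rule adjacent_swap.BSL_remove_box[OF A]) (use B w_eq t0 tmin in \<open>auto simp: T'_def w'q t_def\<close>)
  moreover have "- int r \<le> t" using BSL_entry[OF B box] t_def by simp
  moreover have "t \<le> T i c" for i c using marked_BSL_lower_bound[OF B] t0 tmin t_def by simp
  moreover have "T q c \<noteq> t" if "c \<noteq> r" for c
  proof
    assume Tqc: "T q c = t"
    then have "(q, c) \<in> diagram n w" using BSL_outside[OF B] t0 t_def by fastforce
    then show False using BSL_row[OF B _ box that] Tqc t0 t_def by simp
  qed
  ultimately show ?thesis using that w' w_eq A t0 t_def w'q by blast
qed

context adjacent_swap begin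

(* The new box lies in row (w' v)^-1 r, where the combination only sees row q of
   T' (or unmarked letters of Tv), so t does not recur there. *)
lemma combine_add_letter:
  assumes v: "v permutes {1..n}" and Bv: "is_BSL n v Tv" and Tv_nonneg: "\<And>a b. 0 \<le> Tv a b"
    and asc_v: "left_ascent (w' \<circ> v) r" and B': "is_BSL n (w' \<circ> v) (combine w' v T' Tv)"
    and B_old: "is_BSL n w' T'"
    and t0: "t < 0" and tr: "- int r \<le> t" and lower: "\<And>a b. t \<le> T' a b"
    and row: "\<And>c. c \<noteq> r \<Longrightarrow> T q c \<noteq> t"
  shows "is_BSL n (adj_swap r \<circ> w' \<circ> v) (combine (adj_swap r \<circ> w') v T Tv)"
proof -
  have wv: "w' \<circ> v permutes {1..n}" by (rule permutes_compose[OF v w'])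
  interpret B: adjacent_swap n "w' \<circ> v" r t "combine (adj_swap r \<circ> w') v T Tv" "combine w' v T' Tv"
    by unfold_locales (use wv r1 r2 asc_v combine_adj_swap[OF v Bv] in auto)
  have vp: "v (inv (w' \<circ> v) r) = q"
    using o_inv_distrib[OF permutes_bij[OF w'] permutes_bij[OF v]] permutes_inverses[OF v] by simp
  have "is_BSL n (adj_swap r \<circ> (w' \<circ> v)) (combine (adj_swap r \<circ> w') v T Tv)"
  proof (rule B.BSL_add_box[OF B' t0 tr])
    fix i c show "t \<le> combine w' v T' Tv i c"
      using lower[of "v i" c] Tv_nonneg[of i "inv w' c"] unfolding combine_def by simp
  next
    fix c
    let ?p = "inv (w' \<circ> v) r"
    show "combine w' v T' Tv ?p c \<noteq> t"
    proof (cases "(q, c) \<in> D'")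
      case True
      have "Tv ?p (inv w' c) = 0"
        using diagrams_disjoint[OF w' v, of ?p c] True vp BSL_outside[OF Bv] by simp
      moreover have "adj_swap r c \<noteq> r" using True old_box_q_succ by (auto simp: adj_swap_cases)
      ultimately show ?thesis using row old_to_new[OF True] vp unfolding combine_def by simp
    next
      case False
      then show ?thesis
        using BSL_outside[OF B_old False] Tv_nonneg[of ?p "inv w' c"] t0 vp
        unfolding combine_def by simp
    qed
  qed
  then show ?thesis by (simp add: o_assoc)
qed

end

lemma combine_is_BSL:
  assumes "u permutes {1..n}" "v permutes {1..n}"
    and "perm_len n (u \<circ> v) = perm_len n u + perm_len n v"
    and "is_BSL n u Tu" "\<And>i j. (i, j) \<in> diagram n u \<Longrightarrow> Tu i j < 0"
    and "is_BSL n v Tv" "\<And>i j. (i, j) \<in> diagram n v \<Longrightarrow> 0 < Tv i j"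
  shows "is_BSL n (u \<circ> v) (combine u v Tu Tv)"
  using assms
proof (induction "perm_len n u" arbitrary: u Tu)
  case 0
  then have "diagram n u = {}" using perm_len_card_diagram[of u n] by simp
  then have "u = id" "\<And>i j. Tu i j = 0" using diagram_empty_id 0 BSL_outside[of n u Tu] by auto
  then have "combine u v Tu Tv = Tv" "u \<circ> v = v" by (simp_all add: combine_def)
  then show ?case using "0.prems"(6) by simp
next
  case (Suc m)
  note u = Suc.prems(1) and v = Suc.prems(2) and Bu = Suc.prems(4) and Bv = Suc.prems(6)
  have "diagram n u \<noteq> {}" using Suc.hyps(2) perm_len_card_diagram[OF u] by auto
  then obtain i0 j0 where "(i0, j0) \<in> diagram n u" by auto
  then obtain r t u' Tu' where u': "u' permutes {1..n}" and u_eq: "adj_swap r \<circ> u' = u"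
    and A: "adjacent_swap n u' r t Tu Tu'" and Bu': "is_BSL n u' Tu'" and t: "t < 0" "- int r \<le> t"
    and lower: "\<And>i c. t \<le> Tu i c" and row: "\<And>c. c \<noteq> r \<Longrightarrow> Tu (inv u' r) c \<noteq> t"
    using peel_minimal_letter[OF u Bu] Suc.prems(5) by metis
  interpret A: adjacent_swap n u' r t Tu Tu' by (rule A)
  have len_u: "perm_len n u = Suc (perm_len n u')"
    using perm_len_adj_swap(1)[OF u' A.r1 A.r2 A.asc] u_eq by simp
  have asc_v: "left_ascent (u' \<circ> v) r" and add': "perm_len n (u' \<circ> v) = perm_len n u' + perm_len n v"
    using length_additive_adj_swap_down[OF u' v A.r1 A.r2 A.asc] Suc.prems(3) u_eq by auto
  have "(i, c) \<in> A.D \<Longrightarrow> Tu i c < 0" for i c using Suc.prems(5) u_eq by simp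
  then have "is_BSL n (u' \<circ> v) (combine u' v Tu' Tv)"
    using Suc.hyps(1)[OF _ u' v add' Bu' _ Bv Suc.prems(7)] Suc.hyps(2) len_u A.marked_old by simp
  moreover have "t \<le> Tu' a b" for a b
    using marked_BSL_lower_bound[OF Bu' t(1)] A.lower_bound_old lower by blast
  ultimately have "is_BSL n (adj_swap r \<circ> u' \<circ> v) (combine (adj_swap r \<circ> u') v Tu Tv)"
    using A.combine_add_letter[OF v Bv _ asc_v _ Bu' t] row unmarked_BSL_nonneg[OF Bv Suc.prems(7)]
    by blast
  then show ?case using u_eq by simp
qed

section \<open>Factorizations of a BSL\<close>

lemma all_marked_iff: "(\<forall>(i, j) \<in> D. is_marked (T i j)) \<longleftrightarrow> (\<forall>i j. (i, j) \<in> D \<longrightarrow> T i j < 0)"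
  unfolding is_marked_def by blast

lemma all_unmarked_iff: "(\<forall>(i, j) \<in> D. is_unmarked (T i j)) \<longleftrightarrow> (\<forall>i j. (i, j) \<in> D \<longrightarrow> 0 < T i j)"
  unfolding is_unmarked_def by blast

definition factorization ::
    "nat \<Rightarrow> (nat \<Rightarrow> nat) \<Rightarrow> labeling \<Rightarrow> (nat \<Rightarrow> nat) \<Rightarrow> (nat \<Rightarrow> nat) \<Rightarrow> labeling \<Rightarrow> labeling \<Rightarrow> bool" where
  "factorization n w T u v Tu Tv \<longleftrightarrow>
     u permutes {1..n} \<and> v permutes {1..n} \<and> u \<circ> v = w \<and>
     perm_len n w = perm_len n u + perm_len n v \<and>
     is_BSL n u Tu \<and> (\<forall>(i, j) \<in> diagram n u. is_marked (Tu i j)) \<and>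
     is_BSL n v Tv \<and> (\<forall>(i, j) \<in> diagram n v. is_unmarked (Tv i j)) \<and>
     T = arr_add (perm_act_right Tu (inv v)) (perm_act_left (inv u) Tv)"

lemma factorization_iff:
  "factorization n w T u v Tu Tv \<longleftrightarrow>
     u permutes {1..n} \<and> v permutes {1..n} \<and> u \<circ> v = w \<and>
     perm_len n w = perm_len n u + perm_len n v \<and>
     is_BSL n u Tu \<and> (\<forall>i j. (i, j) \<in> diagram n u \<longrightarrow> Tu i j < 0) \<and>
     is_BSL n v Tv \<and> (\<forall>i j. (i, j) \<in> diagram n v \<longrightarrow> 0 < Tv i j) \<and>
     T = combine u v Tu Tv"
  unfolding factorization_def all_marked_iff all_unmarked_iff
  by (cases "v permutes {1..n}") (auto simp: arr_add_eq_combine)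

lemma factorization_unmarked:
  assumes w: "w permutes {1..n}" and B: "is_BSL n w T"
    and unmarked: "\<And>i j. (i, j) \<in> diagram n w \<Longrightarrow> \<not> T i j < 0"
  shows "factorization n w T id w (\<lambda>_ _. 0) T"
proof -
  have "perm_len n id = 0" using perm_len_card_diagram[OF permutes_id] diagram_id by simp
  moreover have "is_BSL n id (\<lambda>_ _. 0)" by (rule is_BSLI) (simp_all add: diagram_id)
  moreover have "0 < T i j" if "(i, j) \<in> diagram n w" for i j
    using BSL_entry[OF B that] unmarked[OF that] by simp
  ultimately show ?thesis
    unfolding factorization_iff using w B diagram_id by (simp add: combine_def)
qed

(* The two summands of a factorization have disjoint supports, so each can be read off from T. *)
lemma factorization_marked_part:
  assumes F: "factorization n w T u v Tu Tv" and a: "(a, c) \<in> diagram n u"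
  shows "Tu a c = T (inv v a) c"
proof -
  have u: "u permutes {1..n}" and v: "v permutes {1..n}" and Bv: "is_BSL n v Tv"
    and T: "T = combine u v Tu Tv" using F unfolding factorization_iff by auto
  have va: "v (inv v a) = a" using permutes_inverses[OF v] by simp
  have "(inv v a, inv u c) \<notin> diagram n v" using diagrams_disjoint[OF u v, of "inv v a" c] a va by simp
  then show ?thesis using BSL_outside[OF Bv] T va by (simp add: combine_def)
qed

lemma factorization_unmarked_part:
  assumes F: "factorization n w T u v Tu Tv" and i: "(i, c) \<in> diagram n v"
  shows "Tv i c = T i (u c)"
proof -
  have u: "u permutes {1..n}" and v: "v permutes {1..n}" and Bu: "is_BSL n u Tu"
    and T: "T = combine u v Tu Tv" using F unfolding factorization_iff by auto
  have iu: "inv u (u c) = c" using permutes_inverses[OF u] by simp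
  have "(v i, u c) \<notin> diagram n u" using diagrams_disjoint[OF u v, of i "u c"] i iu by auto
  then show ?thesis using BSL_outside[OF Bu] T iu by (simp add: combine_def)
qed

lemma factorization_positive_entries:
  assumes F: "factorization n w T u v Tu Tv"
  shows "0 < T i j \<longleftrightarrow> (i, inv u j) \<in> diagram n v"
proof -
  have u: "u permutes {1..n}" and v: "v permutes {1..n}" and Bu: "is_BSL n u Tu"
    and mu: "\<And>i j. (i, j) \<in> diagram n u \<Longrightarrow> Tu i j < 0"
    and Bv: "is_BSL n v Tv" and mv: "\<And>i j. (i, j) \<in> diagram n v \<Longrightarrow> 0 < Tv i j"
    and T: "T = combine u v Tu Tv"
    using F unfolding factorization_iff by auto
  show ?thesis
  proof (cases "(i, inv u j) \<in> diagram n v")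
    case True
    then have "(v i, j) \<notin> diagram n u" using diagrams_disjoint[OF u v] by blast
    then show ?thesis using True mv BSL_outside[OF Bu] T by (simp add: combine_def)
  next
    case False
    have "Tu (v i) j \<le> 0"
      using mu[of "v i" j] BSL_outside[OF Bu, of "v i" j] by (cases "(v i, j) \<in> diagram n u") auto
    then show ?thesis using False BSL_outside[OF Bv] T by (simp add: combine_def)
  qed
qed

lemma factorization_row_card:
  assumes F: "factorization n w T u v Tu Tv"
  shows "card {j. 0 < T i j} = card {c. (i, c) \<in> diagram n v}"
proof -
  have u: "u permutes {1..n}" using F unfolding factorization_def by simp
  have "{j. 0 < T i j} = u ` {c. (i, c) \<in> diagram n v}"
    using factorization_positive_entries[OF F] permutes_inverses[OF u] by (auto intro: rev_image_eqI)
  moreover have "inj_on u X" for X using permutes_inj[OF u] by (simp add: inj_on_def inj_def)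
  ultimately show ?thesis by (simp add: card_image)
qed

(* Uniqueness: the row lengths of D(v) are visible in T, so v, hence u = w v^-1, and then Tu,
   Tv are determined. *)
lemma factorization_unique:
  assumes F1: "factorization n w T u1 v1 Tu1 Tv1" and F2: "factorization n w T u2 v2 Tu2 Tv2"
  shows "(u1, v1, Tu1, Tv1) = (u2, v2, Tu2, Tv2)"
proof -
  have u1: "u1 permutes {1..n}" and v1: "v1 permutes {1..n}" and w1: "u1 \<circ> v1 = w"
    and Bu1: "is_BSL n u1 Tu1" and Bv1: "is_BSL n v1 Tv1"
    using F1 unfolding factorization_def by auto
  have u2: "u2 permutes {1..n}" and v2: "v2 permutes {1..n}" and w2: "u2 \<circ> v2 = w"
    and Bu2: "is_BSL n u2 Tu2" and Bv2: "is_BSL n v2 Tv2"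
    using F2 unfolding factorization_def by auto
  have v: "v1 = v2"
    by (rule rows_determine[OF v1 v2]) (metis factorization_row_card[OF F1] factorization_row_card[OF F2])
  have u: "u1 = u2"
  proof
    fix x
    have "u1 (v1 (inv v1 x)) = u2 (v2 (inv v1 x))" using w1 w2 by (metis comp_apply)
    then show "u1 x = u2 x" using v permutes_inverses[OF v1] by simp
  qed
  have "Tv1 i c = Tv2 i c" for i c
    using factorization_unmarked_part[OF F1] factorization_unmarked_part[OF F2]
      BSL_outside[OF Bv1] BSL_outside[OF Bv2] u v by (cases "(i, c) \<in> diagram n v1") auto
  moreover have "Tu1 a c = Tu2 a c" for a c
    using factorization_marked_part[OF F1] factorization_marked_part[OF F2]
      BSL_outside[OF Bu1] BSL_outside[OF Bu2] u v by (cases "(a, c) \<in> diagram n u1") auto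
  ultimately show ?thesis using u v by (simp add: fun_eq_iff)
qed

context adjacent_swap begin

lemma factorization_add_letter:
  assumes F': "factorization n w' T' u' v Tu' Tv"
    and t0: "t < 0" and tr: "- int r \<le> t" and lower: "\<And>a b. t \<le> T' a b"
    and row: "\<And>c. c \<noteq> r \<Longrightarrow> T q c \<noteq> t"
  shows "factorization n (adj_swap r \<circ> w') T (adj_swap r \<circ> u') v
           (\<lambda>i j. if i = inv u' r \<and> j = r then t else Tu' i (adj_swap r j)) Tv"
    (is "factorization _ _ _ _ _ ?Tu _")
proof -
  have u': "u' permutes {1..n}" and v: "v permutes {1..n}" and uv: "u' \<circ> v = w'"
    and add': "perm_len n w' = perm_len n u' + perm_len n v"
    and Bu': "is_BSL n u' Tu'" and mu': "\<And>i j. (i, j) \<in> diagram n u' \<Longrightarrow> Tu' i j < 0"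
    and Bv: "is_BSL n v Tv" and mv: "\<forall>i j. (i, j) \<in> diagram n v \<longrightarrow> 0 < Tv i j"
    and T': "T' = combine u' v Tu' Tv"
    using F' unfolding factorization_iff by auto
  have asc_u: "left_ascent u' r"
    and add: "perm_len n (adj_swap r \<circ> u' \<circ> v) = perm_len n (adj_swap r \<circ> u') + perm_len n v"
    using length_additive_adj_swap_up[OF u' v r1 r2 _ add'[folded uv]] asc uv by auto
  interpret U: adjacent_swap n u' r t ?Tu Tu' by unfold_locales (use u' r1 r2 asc_u in auto)
  have q: "inv v (inv u' r) = q"
    using o_inv_distrib[OF permutes_bij[OF u'] permutes_bij[OF v]] uv by simp
  have "is_BSL n (adj_swap r \<circ> u') ?Tu"
  proof (rule U.BSL_add_box[OF Bu' t0 tr])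
    fix i c assume "(i, c) \<in> diagram n u'"
    then show "t \<le> Tu' i c" using factorization_marked_part[OF F'] lower by simp
  next
    fix c assume c: "(inv u' r, c) \<in> diagram n u'"
    then have "c \<noteq> Suc r" using U.old_box_q_succ by auto
    then have "Tu' (inv u' r) c = T q (adj_swap r c)" "adj_swap r c \<noteq> r"
      using factorization_marked_part[OF F' c] q T_swapped[of q c] by (auto simp: adj_swap_cases)
    then show "Tu' (inv u' r) c \<noteq> t" using row by simp
  qed
  moreover have "T = combine (adj_swap r \<circ> u') v ?Tu Tv"
    unfolding U.combine_adj_swap[OF v Bv] uv using T_eq by (simp add: fun_eq_iff T')
  moreover have "(adj_swap r \<circ> u') \<circ> v = adj_swap r \<circ> w'" using uv by (simp add: comp_assoc)
  ultimately show ?thesis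
    unfolding factorization_iff
    using U.marked_new[OF t0 mu'] permutes_compose[OF u' adj_swap_permutes[OF r1 r2]] v Bv mv add
    by (simp add: o_assoc)
qed

end

lemma factorization_exists:
  assumes "w permutes {1..n}" "is_BSL n w T"
  shows "\<exists>u v Tu Tv. factorization n w T u v Tu Tv"
  using assms
proof (induction "perm_len n w" arbitrary: w T rule: less_induct)
  case less
  note w = less.prems(1) and B = less.prems(2)
  show ?case
  proof (cases "\<exists>i j. (i, j) \<in> diagram n w \<and> T i j < 0")
    case False
    then show ?thesis using factorization_unmarked[OF w B] by blast
  next
    case True
    then obtain r t w' T' where w': "w' permutes {1..n}" and w_eq: "adj_swap r \<circ> w' = w"
      and A: "adjacent_swap n w' r t T T'" and BT': "is_BSL n w' T'" and t: "t < 0" "- int r \<le> t"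
      and lower: "\<And>i c. t \<le> T i c" and row: "\<And>c. c \<noteq> r \<Longrightarrow> T (inv w' r) c \<noteq> t"
      using peel_minimal_letter[OF w B] by metis
    interpret A: adjacent_swap n w' r t T T' by (rule A)
    have "perm_len n w' < perm_len n w"
      using perm_len_adj_swap(1)[OF w' A.r1 A.r2 A.asc] w_eq by simp
    then obtain u' v Tu' Tv where F': "factorization n w' T' u' v Tu' Tv"
      using less.hyps[OF _ w' BT'] by blast
    have "t \<le> T' a b" for a b
      using marked_BSL_lower_bound[OF BT' t(1)] A.lower_bound_old lower by blast
    then show ?thesis using A.factorization_add_letter[OF F' t] row w_eq by blast
  qed
qed

theorem mainTheorem1:
  fixes n :: nat
  shows "(\<forall>u v Tu Tv.
            u permutes {1..n} \<and> v permutes {1..n} \<and>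
            perm_len n (u \<circ> v) = perm_len n u + perm_len n v \<and>
            is_BSL n u Tu \<and> (\<forall>(i, j) \<in> diagram n u. is_marked (Tu i j)) \<and>
            is_BSL n v Tv \<and> (\<forall>(i, j) \<in> diagram n v. is_unmarked (Tv i j))
          \<longrightarrow> is_BSL n (u \<circ> v)
                (arr_add (perm_act_right Tu (inv v)) (perm_act_left (inv u) Tv)))
       \<and>
         (\<forall>w T. w permutes {1..n} \<and> is_BSL n w T \<longrightarrow>
            (\<exists>!(u, v, Tu, Tv).
               u permutes {1..n} \<and> v permutes {1..n} \<and> u \<circ> v = w \<and>
               perm_len n w = perm_len n u + perm_len n v \<and>
               is_BSL n u Tu \<and> (\<forall>(i, j) \<in> diagram n u. is_marked (Tu i j)) \<and>
               is_BSL n v Tv \<and> (\<forall>(i, j) \<in> diagram n v. is_unmarked (Tv i j)) \<and>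
               T = arr_add (perm_act_right Tu (inv v)) (perm_act_left (inv u) Tv)))"
proof (unfold factorization_def[symmetric], intro conjI allI impI, goal_cases)
  case (1 u v Tu Tv)
  then show ?case
    using combine_is_BSL[of u n v Tu Tv] arr_add_eq_combine[of v "{1..n}" Tu u Tv]
    unfolding all_marked_iff all_unmarked_iff by auto
next
  case (2 w T)
  then obtain u v Tu Tv where F: "factorization n w T u v Tu Tv"
    using factorization_exists by blast
  show ?case
  proof (rule ex1I[of _ "(u, v, Tu, Tv)"])
    show "case (u, v, Tu, Tv) of (u, v, Tu, Tv) \<Rightarrow> factorization n w T u v Tu Tv" using F by simp
  next
    fix x assume "case x of (u, v, Tu, Tv) \<Rightarrow> factorization n w T u v Tu Tv"
    then show "x = (u, v, Tu, Tv)" using factorization_unique[OF _ F] by (cases x) auto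
  qed
qed

end
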